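(* Let $u_{x,y}$ and $v_{x,y}$ be matrices of generalized kernels and put $\hat u_{x,y}=u_{x,y}+v_{x,y}$. Assume both $u$ and $\hat u$ are quasidefinite, and denote by $P^{[i]}_n,H_n,K_n$ the objects associated with $u$ and by $\hat P^{[i]}_n,\hat H_n$ those associated with $\hat u$. Then for every $n\ge0$ (with $K_{-1}:=0$) and every $z$, $$\hat P^{[1]}_n(z)=P^{[1]}_n(z)-\big\langle \hat P^{[1]}_n(x),(K_{n-1}(z,y))^\top\big\rangle_v,\qquad (\hat P^{[2]}_n(z))^\top=(P^{[2]}_n(z))^\top-\big\langle K_{n-1}(x,z),\hat P^{[2]}_n(y)\big\rangle_v,$$ and $$\hat H_n=H_n+\langle \hat P^{[1]}_n(x),P^{[2]}_n(y)\rangle_v=H_n+\langle P^{[1]}_n(x),\hat P^{[2]}_n(y)\rangle_v .$$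
   Context: Fix an integer $p\ge1$; ${}^\top$ denotes transpose. A matrix of generalized kernels $w_{x,y}$ is a $p\times p$ matrix of continuous linear functionals on $\mathbb C[x,y]$, defining the sesquilinear form $\langle P(x),Q(y)\rangle_w\in\mathbb C^{p\times p}$ for $P,Q\in\mathbb C^{p\times p}[x]$ with entries $(\langle P,Q\rangle_w)_{i,j}=\sum_{k,l=1}^p\langle (w_{x,y})_{k,l},P_{i,k}(x)Q_{j,l}(y)\rangle$; it is left-linear in the first argument and satisfies $\langle P,AQ\rangle_w=\langle P,Q\rangle_wA^\top$; forms add: $\langle\cdot,\cdot\rangle_{u+v}=\langle\cdot,\cdot\rangle_u+\langle\cdot,\cdot\rangle_v$. When an argument depends polynomially on an extra parameter $z$, the form is applied with $z$ fixed. Gram matrix $G_{k,l}=\langle I_px^k,I_py^l\rangle_w$; $w$ is quasidefinite if all leading block truncations $(G_{i,j})_{0\le i,j\le k-1}$ are nonsingular. Then $G=S_1^{-1}HS_2^{-\top}$ uniquely with $S_1,S_2$ block lower unitriangular and $H=\operatorname{diag}(H_0,H_1,\dots)$; the monic matrix polynomials $P^{[i]}_n(x)=\sum_{k=0}^n(S_i)_{n,k}x^k$ satisfy $\langle P^{[1]}_n(x),P^{[2]}_m(y)\rangle_w=\delta_{n,m}H_n$. The Christoffel--Darboux kernel is $K_n(x,y)=\sum_{k=0}^n(P^{[2]}_k(y))^\top H_k^{-1}P^{[1]}_k(x)$. *)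

theory Defs
  imports "HOL-Computational_Algebra.Polynomial" "Jordan_Normal_Form.Gauss_Jordan_Elimination"
    "Jordan_Normal_Form.Determinant"
begin

text \<open>A generalized kernel (linear functional on C[x,y]) is represented by its
  moments: mom a b = value of the functional on x^a y^b.\<close>
type_synonym kernel = "nat \<Rightarrow> nat \<Rightarrow> complex"

definition kpair :: "kernel \<Rightarrow> complex poly \<Rightarrow> complex poly \<Rightarrow> complex" where
  "kpair w f g = (\<Sum>a\<le>degree f. \<Sum>b\<le>degree g. coeff f a * coeff g b * w a b)"

text \<open>Sesquilinear form for a p x p matrix of kernels W; P is a matrix polynomial
  in x (entries P_{i,k}), Q a matrix polynomial in y.\<close>
definition mform :: "nat \<Rightarrow> kernel mat \<Rightarrow> complex poly mat \<Rightarrow> complex poly mat \<Rightarrow> complex mat" where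
  "mform p W P Q = mat p p (\<lambda>(i,j). \<Sum>k<p. \<Sum>l<p. kpair (W $$ (k,l)) (P $$ (i,k)) (Q $$ (j,l)))"

definition kadd :: "nat \<Rightarrow> kernel mat \<Rightarrow> kernel mat \<Rightarrow> kernel mat" where
  "kadd p u v = mat p p (\<lambda>(k,l). \<lambda>a b. (u $$ (k,l)) a b + (v $$ (k,l)) a b)"

definition Ixk :: "nat \<Rightarrow> nat \<Rightarrow> complex poly mat" where
  "Ixk p k = mat p p (\<lambda>(i,j). if i = j then monom 1 k else 0)"

definition gram :: "nat \<Rightarrow> kernel mat \<Rightarrow> nat \<Rightarrow> nat \<Rightarrow> complex mat" where
  "gram p W k l = mform p W (Ixk p k) (Ixk p l)"

definition gram_trunc :: "nat \<Rightarrow> kernel mat \<Rightarrow> nat \<Rightarrow> complex mat" where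
  "gram_trunc p W k = mat (k*p) (k*p) (\<lambda>(a,b). gram p W (a div p) (b div p) $$ (a mod p, b mod p))"

definition quasidefinite :: "nat \<Rightarrow> kernel mat \<Rightarrow> bool" where
  "quasidefinite p W \<longleftrightarrow> (\<forall>k\<ge>1. det (gram_trunc p W k) \<noteq> 0)"

definition msum :: "nat \<Rightarrow> ('b \<Rightarrow> 'a::comm_monoid_add mat) \<Rightarrow> 'b set \<Rightarrow> 'a mat" where
  "msum p f A = mat p p (\<lambda>(i,j). \<Sum>a\<in>A. f a $$ (i,j))"

text \<open>Block Gauss factorization G = S1^{-1} H S2^{-T}, written equivalently as
  S1 G S2^T = H (S1, S2 block lower unitriangular, H block diagonal).\<close>
definition gauss_fact :: "nat \<Rightarrow> kernel mat \<Rightarrow> (nat \<Rightarrow> nat \<Rightarrow> complex mat) \<Rightarrow>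
    (nat \<Rightarrow> complex mat) \<Rightarrow> (nat \<Rightarrow> nat \<Rightarrow> complex mat) \<Rightarrow> bool" where
  "gauss_fact p W S1 H S2 \<longleftrightarrow>
     (\<forall>n k. S1 n k \<in> carrier_mat p p \<and> S2 n k \<in> carrier_mat p p) \<and>
     (\<forall>n. H n \<in> carrier_mat p p) \<and>
     (\<forall>n. S1 n n = 1\<^sub>m p \<and> S2 n n = 1\<^sub>m p) \<and>
     (\<forall>n k. n < k \<longrightarrow> S1 n k = 0\<^sub>m p p \<and> S2 n k = 0\<^sub>m p p) \<and>
     (\<forall>n m. msum p (\<lambda>(k,l). S1 n k * gram p W k l * transpose_mat (S2 m l)) ({..n} \<times> {..m})
            = (if n = m then H n else 0\<^sub>m p p))"

definition gfact :: "nat \<Rightarrow> kernel mat \<Rightarrow>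
    (nat \<Rightarrow> nat \<Rightarrow> complex mat) \<times> (nat \<Rightarrow> complex mat) \<times> (nat \<Rightarrow> nat \<Rightarrow> complex mat)" where
  "gfact p W = (THE (S1,H,S2). gauss_fact p W S1 H S2)"

definition S1 where "S1 p W = fst (gfact p W)"
definition Hn where "Hn p W = fst (snd (gfact p W))"
definition S2 where "S2 p W = snd (snd (gfact p W))"

definition mpoly_of :: "nat \<Rightarrow> (nat \<Rightarrow> nat \<Rightarrow> complex mat) \<Rightarrow> nat \<Rightarrow> complex poly mat" where
  "mpoly_of p S n = mat p p (\<lambda>(i,j). \<Sum>k\<le>n. monom (S n k $$ (i,j)) k)"

definition P1 :: "nat \<Rightarrow> kernel mat \<Rightarrow> nat \<Rightarrow> complex poly mat" where
  "P1 p W n = mpoly_of p (S1 p W) n"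
definition P2 :: "nat \<Rightarrow> kernel mat \<Rightarrow> nat \<Rightarrow> complex poly mat" where
  "P2 p W n = mpoly_of p (S2 p W) n"

definition meval :: "complex poly mat \<Rightarrow> complex \<Rightarrow> complex mat" where
  "meval P z = map_mat (\<lambda>f. poly f z) P"

definition mconst :: "complex mat \<Rightarrow> complex poly mat" where
  "mconst A = map_mat (\<lambda>c. [:c:]) A"

definition minv :: "complex mat \<Rightarrow> complex mat" where
  "minv A = the (mat_inverse A)"

text \<open>K_{n-1}(z,y) for fixed z, as a matrix polynomial in y (K_{-1} = 0):
  sum_{k<n} (P2_k(y))^T H_k^{-1} P1_k(z).\<close>
definition Kprev_zy :: "nat \<Rightarrow> kernel mat \<Rightarrow> nat \<Rightarrow> complex \<Rightarrow> complex poly mat" where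
  "Kprev_zy p W n z = msum p (\<lambda>k. transpose_mat (P2 p W k) * mconst (minv (Hn p W k) * meval (P1 p W k) z)) {..<n}"

text \<open>K_{n-1}(x,z) for fixed z, as a matrix polynomial in x (K_{-1} = 0):
  sum_{k<n} (P2_k(z))^T H_k^{-1} P1_k(x).\<close>
definition Kprev_xz :: "nat \<Rightarrow> kernel mat \<Rightarrow> nat \<Rightarrow> complex \<Rightarrow> complex poly mat" where
  "Kprev_xz p W n z = msum p (\<lambda>k. mconst (transpose_mat (meval (P2 p W k) z) * minv (Hn p W k)) * P1 p W k) {..<n}"

end

theory Submission
  imports Defs
begin

text \<open>
  Write \<open>w = u + v\<close>. The invertibility of the leading truncations of a Gram matrix yields a
  unique block Gauss factorization, hence biorthogonality \<open>\<langle>P1 n, P2 m\<rangle> = \<delta>\<^sub>n\<^sub>m H n\<close> with \<open>H n\<close>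
  invertible; moreover \<open>P1 n\<close> annihilates every matrix polynomial of degree \<open>< n\<close>, and a
  polynomial of degree \<open>< n\<close> orthogonal to all \<open>P2 k\<close>, \<open>k < n\<close>, vanishes. So every \<open>D\<close> of
  degree \<open>< n\<close> expands as \<open>D = \<Sum>k<n. \<langle>D, P2 k\<rangle> (H k)\<^sup>-\<^sup>1 P1 k\<close>. For the difference of monic
  polynomials \<open>D = P1\<^sub>u n - P1\<^sub>w n\<close> the coefficients are \<open>\<langle>P1\<^sub>w n, P2\<^sub>u k\<rangle>\<^sub>v (H\<^sub>u k)\<^sup>-\<^sup>1\<close>, because
  \<open>\<langle>P1\<^sub>w n, P2\<^sub>u k\<rangle>\<^sub>w = 0\<close> for \<open>k < n\<close>; evaluating at \<open>z\<close> gives the Christoffel--Darboux kernel.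
  The second family is symmetric. For \<open>H\<^sub>w n = \<langle>P1\<^sub>w n, P2\<^sub>w n\<rangle>\<^sub>w\<close>, each perturbed polynomial may
  be replaced by the unperturbed one, as they differ by a polynomial of lower degree, which the
  other factor annihilates.
\<close>

lemma square_mat_carrier[simp]:
  fixes A B :: "'a::comm_ring_1 mat"
  assumes "A \<in> carrier_mat p p" "B \<in> carrier_mat p p"
  shows "A * B \<in> carrier_mat p p" "A + B \<in> carrier_mat p p" "A - B \<in> carrier_mat p p"
  using assms by auto

lemma square_mat_unit_simps[simp]:
  fixes A :: "'a::comm_ring_1 mat"
  assumes "A \<in> carrier_mat p p"
  shows "A * 1\<^sub>m p = A" "1\<^sub>m p * A = A" "A * 0\<^sub>m p p = 0\<^sub>m p p" "0\<^sub>m p p * A = 0\<^sub>m p p"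
    "A + 0\<^sub>m p p = A" "0\<^sub>m p p + A = A" "A - 0\<^sub>m p p = A" "0\<^sub>m p p - A = - A"
  using assms by auto

lemma msum_carrier[simp]: "msum p f A \<in> carrier_mat p p"
  by (simp add: msum_def)

lemma msum_dims[simp]: "dim_row (msum p f A) = p" "dim_col (msum p f A) = p"
  by (simp_all add: msum_def)

lemma msum_index[simp]: "i < p \<Longrightarrow> j < p \<Longrightarrow> msum p f A $$ (i,j) = (\<Sum>a\<in>A. f a $$ (i,j))"
  by (simp add: msum_def)

lemma msum_cong: "(\<And>a. a \<in> A \<Longrightarrow> f a = g a) \<Longrightarrow> msum p f A = msum p g A"
  by (auto simp: msum_def intro!: sum.cong)

lemma msum_zero: "(\<And>a. a \<in> A \<Longrightarrow> f a = 0\<^sub>m p p) \<Longrightarrow> msum p f A = 0\<^sub>m p p"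
  by (rule eq_matI) auto

lemma msum_atMost:
  fixes n :: nat
  assumes "f n \<in> carrier_mat p p"
  shows "msum p f {..n} = msum p f {..<n} + f n"
  using assms by (intro eq_matI) (auto simp: lessThan_Suc_atMost[symmetric])

lemma msum_single:
  assumes "finite A" "k \<in> A" "f k \<in> carrier_mat p p" "\<And>a. a \<in> A \<Longrightarrow> a \<noteq> k \<Longrightarrow> f a = 0\<^sub>m p p"
  shows "msum p f A = f k"
proof (rule eq_matI)
  fix i j assume "i < dim_row (f k)" "j < dim_col (f k)"
  with assms show "msum p f A $$ (i,j) = f k $$ (i,j)"
    by (subst msum_index, simp_all, subst sum.remove[of _ k]) (auto intro!: sum.neutral)
qed (use assms in auto)

lemma msum_swap:
  assumes "finite A" "finite B"
  shows "msum p (\<lambda>a. msum p (f a) B) A = msum p (\<lambda>b. msum p (\<lambda>a. f a b) A) B"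
  by (rule eq_matI) (auto intro: sum.swap)

lemma msum_Sigma:
  assumes "finite A" "finite B"
  shows "msum p f (A \<times> B) = msum p (\<lambda>a. msum p (\<lambda>b. f (a,b)) B) A"
  using assms by (intro eq_matI) (auto simp: sum.cartesian_product)

lemma msum_Sigma':
  assumes "finite A" "finite B"
  shows "msum p f (A \<times> B) = msum p (\<lambda>b. msum p (\<lambda>a. f (a,b)) A) B"
  by (simp add: msum_Sigma[OF assms] msum_swap[OF assms])

lemma msum_diff:
  fixes f g :: "'b \<Rightarrow> 'a::ab_group_add mat"
  assumes "\<And>a. a \<in> A \<Longrightarrow> f a \<in> carrier_mat p p" "\<And>a. a \<in> A \<Longrightarrow> g a \<in> carrier_mat p p"
  shows "msum p (\<lambda>a. f a - g a) A = msum p f A - msum p g A"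
proof (rule eq_matI)
  fix i j assume "i < dim_row (msum p f A - msum p g A)" "j < dim_col (msum p f A - msum p g A)"
  with assms show "msum p (\<lambda>a. f a - g a) A $$ (i,j) = (msum p f A - msum p g A) $$ (i,j)"
    by (simp add: sum_subtractf[symmetric]) (intro sum.cong; force)
qed auto

lemma transpose_msum:
  assumes "\<And>a. a \<in> A \<Longrightarrow> f a \<in> carrier_mat p p"
  shows "transpose_mat (msum p f A) = msum p (\<lambda>a. transpose_mat (f a)) A"
  by (rule eq_matI) (auto intro!: sum.cong dest: assms)

lemma mat_mult_index_sum:
  assumes "A \<in> carrier_mat m k" "B \<in> carrier_mat k n" "i < m" "j < n"
  shows "(A * B) $$ (i,j) = (\<Sum>x<k. A $$ (i,x) * B $$ (x,j))"
  using assms by (auto simp: scalar_prod_def lessThan_atLeast0 intro!: sum.cong)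

lemma square_mat_mult_index:
  "A \<in> carrier_mat p p \<Longrightarrow> B \<in> carrier_mat p p \<Longrightarrow> i < p \<Longrightarrow> j < p \<Longrightarrow>
    (A * B) $$ (i,j) = (\<Sum>x<p. A $$ (i,x) * B $$ (x,j))"
  by (rule mat_mult_index_sum)

lemma msum_mult_left:
  assumes "X \<in> carrier_mat p p" "\<And>a. a \<in> A \<Longrightarrow> f a \<in> carrier_mat p p"
  shows "X * msum p f A = msum p (\<lambda>a. X * f a) A"
proof (rule eq_matI)
  fix i j assume "i < dim_row (msum p (\<lambda>a. X * f a) A)" "j < dim_col (msum p (\<lambda>a. X * f a) A)"
  hence ij: "i < p" "j < p" by auto
  have "(X * msum p f A) $$ (i,j) = (\<Sum>k<p. X $$ (i,k) * (\<Sum>a\<in>A. f a $$ (k,j)))"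
    using assms ij by (simp del: index_mult_mat add: square_mat_mult_index)
  also have "\<dots> = (\<Sum>a\<in>A. \<Sum>k<p. X $$ (i,k) * f a $$ (k,j))"
    by (simp add: sum_distrib_left sum.swap[of _ "{..<p}"])
  also have "\<dots> = (\<Sum>a\<in>A. (X * f a) $$ (i,j))"
    using assms ij by (intro sum.cong refl) (subst square_mat_mult_index; auto)
  finally show "(X * msum p f A) $$ (i,j) = msum p (\<lambda>a. X * f a) A $$ (i,j)"
    using ij by simp
qed (use assms in auto)

lemma msum_mult_right:
  assumes "X \<in> carrier_mat p p" "\<And>a. a \<in> A \<Longrightarrow> f a \<in> carrier_mat p p"
  shows "msum p f A * X = msum p (\<lambda>a. f a * X) A"
proof (rule eq_matI)
  fix i j assume "i < dim_row (msum p (\<lambda>a. f a * X) A)" "j < dim_col (msum p (\<lambda>a. f a * X) A)"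
  hence ij: "i < p" "j < p" by auto
  have "(msum p f A * X) $$ (i,j) = (\<Sum>k<p. (\<Sum>a\<in>A. f a $$ (i,k)) * X $$ (k,j))"
    using assms ij by (subst square_mat_mult_index) auto
  also have "\<dots> = (\<Sum>a\<in>A. \<Sum>k<p. f a $$ (i,k) * X $$ (k,j))"
    by (simp add: sum_distrib_right sum.swap[of _ "{..<p}"])
  also have "\<dots> = (\<Sum>a\<in>A. (f a * X) $$ (i,j))"
    using assms ij by (intro sum.cong refl) (subst square_mat_mult_index; auto)
  finally show "(msum p f A * X) $$ (i,j) = msum p (\<lambda>a. f a * X) A $$ (i,j)"
    using ij by simp
qed (use assms in auto)

lemma msum_mult_msum_assoc:
  assumes "finite A" "finite B" "\<And>a. c a \<in> carrier_mat p p"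
    "\<And>a b. X a b \<in> carrier_mat p p" "\<And>b. Y b \<in> carrier_mat p p"
  shows "msum p (\<lambda>a. c a * msum p (\<lambda>b. X a b * Y b) B) A
       = msum p (\<lambda>b. msum p (\<lambda>a. c a * X a b) A * Y b) B"
proof -
  have "msum p (\<lambda>a. c a * msum p (\<lambda>b. X a b * Y b) B) A
      = msum p (\<lambda>a. msum p (\<lambda>b. c a * X a b * Y b) B) A"
    using assms by (intro msum_cong, subst msum_mult_left)
      (auto intro!: msum_cong mult_carrier_mat[of _ p p _ p] simp: assoc_mult_mat[of _ p p _ p _ p])
  also have "\<dots> = msum p (\<lambda>b. msum p (\<lambda>a. c a * X a b * Y b) A) B"
    by (rule msum_swap[OF assms(1,2)])
  also have "\<dots> = msum p (\<lambda>b. msum p (\<lambda>a. c a * X a b) A * Y b) B"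
    using assms by (intro msum_cong msum_mult_right[symmetric]) (auto intro: mult_carrier_mat[of _ p p _ p])
  finally show ?thesis .
qed

lemma mat_eq_if_diff_zero:
  fixes A B :: "'a::ab_group_add mat"
  assumes "A - B = 0\<^sub>m n m" "A \<in> carrier_mat n m" "B \<in> carrier_mat n m"
  shows "A = B"
proof (rule eq_matI)
  fix i j assume "i < dim_row B" "j < dim_col B"
  with assms have "A $$ (i,j) - B $$ (i,j) = 0"
    by (metis carrier_matD index_minus_mat(1) index_zero_mat(1))
  thus "A $$ (i,j) = B $$ (i,j)" by simp
qed (use assms in auto)

lemma mat_eq_diff_if_diff_eq:
  fixes A B C :: "'a::ab_group_add mat"
  assumes "B - A = C" "A \<in> carrier_mat n m" "B \<in> carrier_mat n m"
  shows "A = B - C"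
  using assms by (intro eq_matI) auto

lemma mat_eq_uminus_if_add_zero:
  fixes A B :: "'a::ab_group_add mat"
  assumes "A + B = 0\<^sub>m n m" "A \<in> carrier_mat n m" "B \<in> carrier_mat n m"
  shows "A = - B"
proof (rule eq_matI)
  fix i j assume "i < dim_row (- B)" "j < dim_col (- B)"
  with assms have "A $$ (i,j) + B $$ (i,j) = 0"
    by (metis carrier_matD index_add_mat(1,2,3) index_uminus_mat(2,3) index_zero_mat(1))
  with \<open>i < dim_row (- B)\<close> \<open>j < dim_col (- B)\<close> show "A $$ (i,j) = (- B) $$ (i,j)"
    by (simp add: eq_neg_iff_add_eq_0)
qed (use assms in auto)

lemma kpair_ext:
  assumes "\<And>a. a \<ge> N \<Longrightarrow> coeff f a = 0" "\<And>b. b \<ge> M \<Longrightarrow> coeff g b = 0"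
  shows "kpair w f g = (\<Sum>a<N. \<Sum>b<M. coeff f a * coeff g b * w a b)"
proof -
  have trunc: "sum h {..<N} = sum h {..<N'}" if "\<And>a. a \<ge> N \<Longrightarrow> h a = 0" "\<And>a. a \<ge> N' \<Longrightarrow> h a = 0"
    for h :: "nat \<Rightarrow> complex" and N N'
  proof (cases "N \<le> N'")
    case True
    thus ?thesis using that(1) by (intro sum.mono_neutral_left) auto
  next
    case False
    thus ?thesis using that(2) by (intro sum.mono_neutral_right) auto
  qed
  have "kpair w f g = (\<Sum>a<Suc (degree f). \<Sum>b<Suc (degree g). coeff f a * coeff g b * w a b)"
    unfolding kpair_def lessThan_Suc_atMost ..
  also have "\<dots> = (\<Sum>a<N. \<Sum>b<Suc (degree g). coeff f a * coeff g b * w a b)"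
    by (rule trunc) (auto simp: coeff_eq_0 assms(1))
  also have "\<dots> = (\<Sum>a<N. \<Sum>b<M. coeff f a * coeff g b * w a b)"
    by (intro sum.cong refl trunc) (auto simp: coeff_eq_0 assms(2))
  finally show ?thesis .
qed

lemma kpair_big:
  "N > degree f \<Longrightarrow> M > degree g \<Longrightarrow> kpair w f g = (\<Sum>a<N. \<Sum>b<M. coeff f a * coeff g b * w a b)"
  by (intro kpair_ext) (auto simp: coeff_eq_0)

lemma kpair_add_left: "kpair w (f + g) h = kpair w f h + kpair w g h"
proof -
  define N where "N = Suc (degree f + degree g + degree (f + g))"
  have "kpair w (f + g) h = (\<Sum>a<N. \<Sum>b<Suc (degree h). coeff (f + g) a * coeff h b * w a b)"
    by (rule kpair_big) (auto simp: N_def)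
  also have "\<dots> = kpair w f h + kpair w g h"
    by (subst (1 2) kpair_big[where N=N and M="Suc (degree h)"])
      (auto simp: N_def algebra_simps sum.distrib)
  finally show ?thesis .
qed

lemma kpair_add_right: "kpair w h (f + g) = kpair w h f + kpair w h g"
proof -
  define N where "N = Suc (degree f + degree g + degree (f + g))"
  have "kpair w h (f + g) = (\<Sum>a<Suc (degree h). \<Sum>b<N. coeff h a * coeff (f + g) b * w a b)"
    by (rule kpair_big) (auto simp: N_def)
  also have "\<dots> = kpair w h f + kpair w h g"
    by (subst (1 2) kpair_big[where N="Suc (degree h)" and M=N])
      (auto simp: N_def algebra_simps sum.distrib)
  finally show ?thesis .
qed

lemma kpair_smult_left: "kpair w (smult c f) h = c * kpair w f h"
  by (subst (1 2) kpair_big[where N="Suc (degree f)" and M="Suc (degree h)"])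
    (auto simp: algebra_simps sum_distrib_left intro: le_less_trans[OF degree_smult_le])

lemma kpair_smult_right: "kpair w h (smult c f) = c * kpair w h f"
  by (subst (1 2) kpair_big[where N="Suc (degree h)" and M="Suc (degree f)"])
    (auto simp: algebra_simps sum_distrib_left intro: le_less_trans[OF degree_smult_le])

lemma kpair_zero_left[simp]: "kpair w 0 h = 0"
  by (simp add: kpair_def)

lemma kpair_zero_right[simp]: "kpair w h 0 = 0"
  by (simp add: kpair_def)

lemma kpair_sum_left: "kpair w (\<Sum>r\<in>R. f r) h = (\<Sum>r\<in>R. kpair w (f r) h)"
  by (induction R rule: infinite_finite_induct) (auto simp: kpair_add_left)

lemma kpair_sum_right: "kpair w h (\<Sum>r\<in>R. f r) = (\<Sum>r\<in>R. kpair w h (f r))"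
  by (induction R rule: infinite_finite_induct) (auto simp: kpair_add_right)

lemma kpair_diff_left: "kpair w (f - g) h = kpair w f h - kpair w g h"
  using kpair_add_left[of w "f - g" g h] by simp

lemma kpair_diff_right: "kpair w h (f - g) = kpair w h f - kpair w h g"
  using kpair_add_right[of w h "f - g" g] by simp

lemma kpair_monom: "kpair w (monom 1 a) (monom 1 b) = w a b"
  by (subst kpair_big[where N="Suc a" and M="Suc b"])
    (auto simp: degree_monom_eq coeff_monom if_distrib cong: if_cong)

lemma kpair_kernel_add: "kpair (\<lambda>a b. w a b + w' a b) f g = kpair w f g + kpair w' f g"
  by (simp add: kpair_def algebra_simps sum.distrib)

definition mcoeff :: "nat \<Rightarrow> complex poly mat \<Rightarrow> nat \<Rightarrow> complex mat" where
  "mcoeff p P a = mat p p (\<lambda>(i,j). coeff (P $$ (i,j)) a)"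

definition mdegree_less :: "nat \<Rightarrow> complex poly mat \<Rightarrow> nat \<Rightarrow> bool" where
  "mdegree_less p P N \<longleftrightarrow> (\<forall>i<p. \<forall>j<p. \<forall>a\<ge>N. coeff (P $$ (i,j)) a = 0)"

lemma mcoeff_carrier[simp]: "mcoeff p P a \<in> carrier_mat p p"
  by (simp add: mcoeff_def)

lemma mcoeff_dims[simp]: "dim_row (mcoeff p P a) = p" "dim_col (mcoeff p P a) = p"
  by (simp_all add: mcoeff_def)

lemma mcoeff_index[simp]: "i < p \<Longrightarrow> j < p \<Longrightarrow> mcoeff p P a $$ (i,j) = coeff (P $$ (i,j)) a"
  by (simp add: mcoeff_def)

lemma mpoly_of_carrier[simp]: "mpoly_of p S n \<in> carrier_mat p p"
  by (simp add: mpoly_of_def)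

lemma mpoly_of_dims[simp]: "dim_row (mpoly_of p S n) = p" "dim_col (mpoly_of p S n) = p"
  by (simp_all add: mpoly_of_def)

lemma coeff_mpoly_of:
  "i < p \<Longrightarrow> j < p \<Longrightarrow> coeff (mpoly_of p S n $$ (i,j)) a = (if a \<le> n then S n a $$ (i,j) else 0)"
  by (simp add: mpoly_of_def coeff_sum coeff_monom)

lemma mcoeff_mpoly_of:
  "S n a \<in> carrier_mat p p \<Longrightarrow> mcoeff p (mpoly_of p S n) a = (if a \<le> n then S n a else 0\<^sub>m p p)"
  by (rule eq_matI) (auto simp: coeff_mpoly_of)

lemma mconst_carrier[simp]: "A \<in> carrier_mat p p \<Longrightarrow> mconst A \<in> carrier_mat p p"
  by (simp add: mconst_def)

lemma mconst_dims[simp]: "dim_row (mconst A) = dim_row A" "dim_col (mconst A) = dim_col A"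
  by (simp_all add: mconst_def)

lemma mconst_index[simp]: "i < dim_row A \<Longrightarrow> j < dim_col A \<Longrightarrow> mconst A $$ (i,j) = [:A $$ (i,j):]"
  by (simp add: mconst_def)

lemma transpose_mconst: "transpose_mat (mconst A) = mconst (transpose_mat A)"
  by (rule eq_matI) auto

lemma mconst_mult_index:
  assumes "A \<in> carrier_mat p p" "P \<in> carrier_mat p p" "i < p" "k < p"
  shows "(mconst A * P) $$ (i,k) = (\<Sum>r<p. smult (A $$ (i,r)) (P $$ (r,k)))"
  using assms by (subst square_mat_mult_index) auto

lemma mdegree_less_mono: "mdegree_less p P N \<Longrightarrow> N \<le> M \<Longrightarrow> mdegree_less p P M"
  by (auto simp: mdegree_less_def)

lemma mdegree_less_mpoly_of: "mdegree_less p (mpoly_of p S n) (Suc n)"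
  by (simp add: mdegree_less_def coeff_mpoly_of)

lemma mdegree_less_diff:
  assumes "P \<in> carrier_mat p p" "Q \<in> carrier_mat p p" "mdegree_less p P N" "mdegree_less p Q N"
  shows "mdegree_less p (P - Q) N"
  using assms by (simp add: mdegree_less_def)

lemma mdegree_less_msum:
  "(\<And>k. k \<in> K \<Longrightarrow> mdegree_less p (f k) N) \<Longrightarrow> mdegree_less p (msum p f K) N"
  by (simp add: mdegree_less_def coeff_sum)

lemma mdegree_less_mconst_mult:
  assumes "A \<in> carrier_mat p p" "P \<in> carrier_mat p p" "mdegree_less p P N"
  shows "mdegree_less p (mconst A * P) N"
  using assms by (simp del: index_mult_mat add: mdegree_less_def mconst_mult_index coeff_sum)

lemma mdegree_less_mpoly_of_diff:
  assumes "S n n = T n n"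
  shows "mdegree_less p (mpoly_of p S n - mpoly_of p T n) n"
  using assms by (auto simp: mdegree_less_def coeff_mpoly_of)

lemma mcoeff_eq_zero_if_mdegree_less:
  "mdegree_less p P N \<Longrightarrow> N \<le> a \<Longrightarrow> mcoeff p P a = 0\<^sub>m p p"
  by (rule eq_matI) (auto simp: mdegree_less_def)

lemma mat_poly_eq_zeroI:
  assumes "D \<in> carrier_mat p p" "\<And>a. mcoeff p D a = 0\<^sub>m p p"
  shows "D = (0\<^sub>m p p :: complex poly mat)"
proof (rule eq_matI)
  fix i j assume "i < dim_row (0\<^sub>m p p :: complex poly mat)" "j < dim_col (0\<^sub>m p p :: complex poly mat)"
  hence "i < p" "j < p" by auto
  hence "coeff (D $$ (i,j)) a = 0" for a
    using assms(2)[of a] by (metis index_zero_mat(1) mcoeff_index)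
  thus "D $$ (i,j) = 0\<^sub>m p p $$ (i,j)" using \<open>i < p\<close> \<open>j < p\<close> by (simp add: poly_eqI)
qed (use assms in auto)

lemma meval_carrier[simp]: "P \<in> carrier_mat p p \<Longrightarrow> meval P z \<in> carrier_mat p p"
  by (simp add: meval_def)

lemma meval_dims[simp]: "dim_row (meval P z) = dim_row P" "dim_col (meval P z) = dim_col P"
  by (simp_all add: meval_def)

lemma meval_index[simp]: "i < dim_row P \<Longrightarrow> j < dim_col P \<Longrightarrow> meval P z $$ (i,j) = poly (P $$ (i,j)) z"
  by (simp add: meval_def)

lemma meval_diff: "P \<in> carrier_mat p p \<Longrightarrow> Q \<in> carrier_mat p p \<Longrightarrow> meval (P - Q) z = meval P z - meval Q z"
  by (rule eq_matI) auto

lemma meval_msum: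
  assumes "\<And>k. k \<in> K \<Longrightarrow> f k \<in> carrier_mat p p"
  shows "meval (msum p f K) z = msum p (\<lambda>k. meval (f k) z) K"
  by (rule eq_matI) (auto simp: poly_sum intro!: sum.cong dest: assms)

lemma meval_mconst_mult:
  assumes "A \<in> carrier_mat p p" "P \<in> carrier_mat p p"
  shows "meval (mconst A * P) z = A * meval P z"
proof (rule eq_matI)
  fix i j assume "i < dim_row (A * meval P z)" "j < dim_col (A * meval P z)"
  hence ij: "i < p" "j < p" using assms by auto
  have "meval (mconst A * P) z $$ (i,j) = poly ((mconst A * P) $$ (i,j)) z"
    using ij assms by (intro meval_index) auto
  also have "\<dots> = (\<Sum>r<p. A $$ (i,r) * poly (P $$ (r,j)) z)"
    using ij assms by (simp only: mconst_mult_index poly_sum poly_smult)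
  also have "\<dots> = (A * meval P z) $$ (i,j)"
    using ij assms by (subst square_mat_mult_index[where p=p]) auto
  finally show "meval (mconst A * P) z $$ (i,j) = (A * meval P z) $$ (i,j)" .
qed (use assms in auto)

lemma meval_msum_mconst_mult:
  assumes "\<And>k. C k \<in> carrier_mat p p" "\<And>k. P k \<in> carrier_mat p p"
  shows "meval (msum p (\<lambda>k. mconst (C k) * P k) K) z = msum p (\<lambda>k. C k * meval (P k) z) K"
  using assms by (subst meval_msum[where p=p]) (auto intro!: msum_cong meval_mconst_mult mult_carrier_mat[of _ p p _ p])

lemma mform_carrier[simp]: "mform p W P Q \<in> carrier_mat p p"
  by (simp add: mform_def)

lemma mform_dims[simp]: "dim_row (mform p W P Q) = p" "dim_col (mform p W P Q) = p"
  by (simp_all add: mform_def)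

lemma mform_index:
  "i < p \<Longrightarrow> j < p \<Longrightarrow>
    mform p W P Q $$ (i,j) = (\<Sum>k<p. \<Sum>l<p. kpair (W $$ (k,l)) (P $$ (i,k)) (Q $$ (j,l)))"
  by (simp add: mform_def)

lemma mform_kadd: "mform p (kadd p u v) P Q = mform p u P Q + mform p v P Q"
  by (rule eq_matI) (auto simp: mform_index kadd_def kpair_kernel_add sum.distrib)

lemma gram_carrier[simp]: "gram p W a b \<in> carrier_mat p p"
  by (simp add: gram_def)

lemma gram_index:
  assumes "k < p" "l < p"
  shows "gram p W a b $$ (k,l) = (W $$ (k,l)) a b"
proof -
  have "gram p W a b $$ (k,l) = (\<Sum>k'<p. \<Sum>l'<p. kpair (W $$ (k',l'))
         (if k = k' then monom 1 a else 0) (if l = l' then monom 1 b else 0))"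
    using assms by (simp add: gram_def mform_index Ixk_def)
  also have "\<dots> = (\<Sum>k'<p. if k' = k then kpair (W $$ (k',l)) (monom 1 a) (monom 1 b) else 0)"
    using assms by (intro sum.cong refl) (auto simp: if_distrib cong: if_cong)
  also have "\<dots> = (W $$ (k,l)) a b"
    using assms by (simp add: kpair_monom)
  finally show ?thesis .
qed

lemma mform_diff_left:
  "P \<in> carrier_mat p p \<Longrightarrow> P' \<in> carrier_mat p p \<Longrightarrow>
    mform p W (P - P') Q = mform p W P Q - mform p W P' Q"
  by (rule eq_matI) (auto simp: mform_index kpair_diff_left sum_subtractf)

lemma mform_diff_right:
  "Q \<in> carrier_mat p p \<Longrightarrow> Q' \<in> carrier_mat p p \<Longrightarrow>
    mform p W P (Q - Q') = mform p W P Q - mform p W P Q'"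
  by (rule eq_matI) (auto simp: mform_index kpair_diff_right sum_subtractf)

lemma mform_msum_left: "mform p W (msum p f K) Q = msum p (\<lambda>k. mform p W (f k) Q) K"
  by (rule eq_matI) (auto simp: mform_index kpair_sum_left
      intro: trans[OF sum.cong[OF refl sum.swap] sum.swap])

lemma mform_msum_right: "mform p W P (msum p f K) = msum p (\<lambda>k. mform p W P (f k)) K"
  by (rule eq_matI) (auto simp: mform_index kpair_sum_right
      intro: trans[OF sum.cong[OF refl sum.swap] sum.swap])

lemma mform_mconst_mult_left:
  assumes A: "A \<in> carrier_mat p p" and P: "P \<in> carrier_mat p p"
  shows "mform p W (mconst A * P) Q = A * mform p W P Q"
proof (rule eq_matI)
  fix i j assume "i < dim_row (A * mform p W P Q)" "j < dim_col (A * mform p W P Q)"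
  hence ij: "i < p" "j < p" using A by auto
  have "mform p W (mconst A * P) Q $$ (i,j) =
     (\<Sum>k<p. \<Sum>l<p. \<Sum>r<p. A $$ (i,r) * kpair (W $$ (k,l)) (P $$ (r,k)) (Q $$ (j,l)))"
    using ij A P by (simp del: index_mult_mat add: mform_index, intro sum.cong refl)
      (simp del: index_mult_mat add: mconst_mult_index kpair_sum_left kpair_smult_left)
  also have "\<dots> = (\<Sum>r<p. \<Sum>k<p. \<Sum>l<p. A $$ (i,r) * kpair (W $$ (k,l)) (P $$ (r,k)) (Q $$ (j,l)))"
    by (rule trans[OF sum.cong[OF refl sum.swap] sum.swap])
  also have "\<dots> = (A * mform p W P Q) $$ (i,j)"
    using ij A by (subst square_mat_mult_index[where p=p]) (auto simp: mform_index sum_distrib_left)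
  finally show "mform p W (mconst A * P) Q $$ (i,j) = (A * mform p W P Q) $$ (i,j)" .
qed (use A in auto)

lemma mform_mconst_mult_right:
  assumes A: "A \<in> carrier_mat p p" and Q: "Q \<in> carrier_mat p p"
  shows "mform p W P (mconst A * Q) = mform p W P Q * transpose_mat A"
proof (rule eq_matI)
  fix i j assume "i < dim_row (mform p W P Q * transpose_mat A)" "j < dim_col (mform p W P Q * transpose_mat A)"
  hence ij: "i < p" "j < p" using A by auto
  have "mform p W P (mconst A * Q) $$ (i,j) =
     (\<Sum>k<p. \<Sum>l<p. \<Sum>r<p. A $$ (j,r) * kpair (W $$ (k,l)) (P $$ (i,k)) (Q $$ (r,l)))"
    using ij A Q by (simp del: index_mult_mat add: mform_index, intro sum.cong refl)
      (simp del: index_mult_mat add: mconst_mult_index kpair_sum_right kpair_smult_right)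
  also have "\<dots> = (\<Sum>r<p. \<Sum>k<p. \<Sum>l<p. A $$ (j,r) * kpair (W $$ (k,l)) (P $$ (i,k)) (Q $$ (r,l)))"
    by (rule trans[OF sum.cong[OF refl sum.swap] sum.swap])
  also have "\<dots> = (mform p W P Q * transpose_mat A) $$ (i,j)"
    using ij A by (subst square_mat_mult_index[where p=p])
      (auto simp: mform_index sum_distrib_left sum_distrib_right algebra_simps)
  finally show "mform p W P (mconst A * Q) $$ (i,j) = (mform p W P Q * transpose_mat A) $$ (i,j)" .
qed (use A in auto)

lemma mform_msum_mconst_mult_left:
  assumes "\<And>k. C k \<in> carrier_mat p p" "\<And>k. P k \<in> carrier_mat p p"
  shows "mform p W (msum p (\<lambda>k. mconst (C k) * P k) K) Q = msum p (\<lambda>k. C k * mform p W (P k) Q) K"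
  using assms by (simp add: mform_msum_left mform_mconst_mult_left)

lemma mform_msum_mconst_mult_right:
  assumes "\<And>k. C k \<in> carrier_mat p p" "\<And>k. Q k \<in> carrier_mat p p"
  shows "mform p W P (msum p (\<lambda>k. mconst (C k) * Q k) K)
       = msum p (\<lambda>k. mform p W P (Q k) * transpose_mat (C k)) K"
  using assms by (simp add: mform_msum_right mform_mconst_mult_right)

lemma mult3_mat_index_sum:
  assumes "A \<in> carrier_mat p p" "B \<in> carrier_mat p p" "C \<in> carrier_mat p p" "i < p" "j < p"
  shows "(A * B * C) $$ (i,j) = (\<Sum>k<p. \<Sum>l<p. A $$ (i,k) * B $$ (k,l) * C $$ (l,j))"
proof -
  have "(A * B * C) $$ (i,j) = (\<Sum>l<p. (A * B) $$ (i,l) * C $$ (l,j))"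
    using assms by (intro square_mat_mult_index) auto
  also have "\<dots> = (\<Sum>l<p. \<Sum>k<p. A $$ (i,k) * B $$ (k,l) * C $$ (l,j))"
    using assms by (intro sum.cong refl) (simp del: index_mult_mat add: square_mat_mult_index sum_distrib_right)
  also have "\<dots> = (\<Sum>k<p. \<Sum>l<p. A $$ (i,k) * B $$ (k,l) * C $$ (l,j))"
    by (rule sum.swap)
  finally show ?thesis .
qed

lemma mform_eq_msum_gram:
  assumes P: "P \<in> carrier_mat p p" "mdegree_less p P N" and Q: "Q \<in> carrier_mat p p" "mdegree_less p Q M"
  shows "mform p W P Q = msum p (\<lambda>(a,b). mcoeff p P a * gram p W a b * transpose_mat (mcoeff p Q b))
            ({..<N} \<times> {..<M})" (is "_ = ?R")
proof (rule eq_matI)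
  fix i j assume "i < dim_row ?R" "j < dim_col ?R"
  hence ij: "i < p" "j < p" by auto
  let ?t = "\<lambda>k l a b. coeff (P $$ (i,k)) a * coeff (Q $$ (j,l)) b * (W $$ (k,l)) a b"
  have "mform p W P Q $$ (i,j) = (\<Sum>k<p. \<Sum>l<p. \<Sum>a<N. \<Sum>b<M. ?t k l a b)"
    using ij by (simp add: mform_index, intro sum.cong refl kpair_ext)
      (use P Q in \<open>auto simp: mdegree_less_def\<close>)
  also have "\<dots> = (\<Sum>a<N. \<Sum>b<M. \<Sum>k<p. \<Sum>l<p. ?t k l a b)"
    by (subst sum.swap) (subst (2) sum.swap, subst sum.swap, rule sum.cong[OF refl], rule sum.swap)
  also have "\<dots> = (\<Sum>a<N. \<Sum>b<M. (mcoeff p P a * gram p W a b * transpose_mat (mcoeff p Q b)) $$ (i,j))"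
    using ij by (intro sum.cong refl) (simp del: index_mult_mat add: mult3_mat_index_sum[where p=p] gram_index mult_ac)
  finally show "mform p W P Q $$ (i,j) = ?R $$ (i,j)"
    using ij by (simp add: sum.cartesian_product case_prod_beta)
qed auto

lemma mform_mpoly_of:
  assumes "\<And>k. S n k \<in> carrier_mat p p" "\<And>l. T m l \<in> carrier_mat p p"
  shows "mform p W (mpoly_of p S n) (mpoly_of p T m)
     = msum p (\<lambda>(k,l). S n k * gram p W k l * transpose_mat (T m l)) ({..n} \<times> {..m})"
  unfolding mform_eq_msum_gram[OF mpoly_of_carrier mdegree_less_mpoly_of mpoly_of_carrier
      mdegree_less_mpoly_of] lessThan_Suc_atMost
  using assms by (intro msum_cong) (auto simp: mcoeff_mpoly_of)

section \<open>Nondegeneracy of a quasidefinite Gram matrix\<close>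

lemma sum_lessThan_mult_blocks:
  fixes h :: "nat \<Rightarrow> 'a::comm_monoid_add"
  shows "(\<Sum>x<n*p. h x) = (\<Sum>a<n. \<Sum>j<p. h (a*p + j))"
proof (induction n)
  case (Suc n)
  have "{..<Suc n * p} = {..<n*p} \<union> {n*p..<n*p+p}" by auto
  hence "(\<Sum>x<Suc n*p. h x) = (\<Sum>x<n*p. h x) + (\<Sum>x\<in>{n*p..<n*p+p}. h x)"
    by (simp add: sum.union_disjoint ivl_disj_int)
  also have "(\<Sum>x\<in>{n*p..<n*p+p}. h x) = (\<Sum>j<p. h (n*p + j))"
    using sum.shift_bounds_nat_ivl[of h 0 "n*p" p] by (simp add: atLeast0LessThan add.commute)
  finally show ?case using Suc by simp
qed simp

lemma block_index_less:
  assumes "a < n" "j < p"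
  shows "a*p + j < n*(p::nat)"
proof -
  have "a*p + j < Suc a * p" using assms by simp
  also have "\<dots> \<le> n * p" using assms by (intro mult_le_mono1) simp
  finally show ?thesis .
qed

lemma gram_trunc_index:
  assumes "0 < p" "a < n" "b < n" "i < p" "j < p"
  shows "gram_trunc p W n $$ (a*p+i, b*p+j) = gram p W a b $$ (i,j)"
  using assms block_index_less[of a n i p] block_index_less[of b n j p] by (simp add: gram_trunc_def)

lemma minv_inverse:
  assumes A: "A \<in> carrier_mat n n" and "det A \<noteq> 0"
  shows "minv A \<in> carrier_mat n n \<and> A * minv A = 1\<^sub>m n \<and> minv A * A = 1\<^sub>m n"
proof (cases "mat_inverse A")
  case None
  have "A \<notin> Units (ring_mat TYPE(complex) n ())" by (rule mat_inverse(1)[OF A None])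
  with det_non_zero_imp_unit[OF assms] show ?thesis by contradiction
next
  case (Some B)
  with mat_inverse(2)[OF A] show ?thesis by (simp add: minv_def)
qed

lemma gram_trunc_inverse:
  assumes "quasidefinite p W" "n \<ge> 1"
  shows "\<exists>B. B \<in> carrier_mat (n*p) (n*p) \<and> gram_trunc p W n * B = 1\<^sub>m (n*p) \<and> B * gram_trunc p W n = 1\<^sub>m (n*p)"
  using assms minv_inverse[of "gram_trunc p W n" "n*p"] by (auto simp: quasidefinite_def gram_trunc_def)

lemma gram_row_solvable:
  assumes q: "quasidefinite p W" and p: "0 < p" and R: "\<And>l. l < n \<Longrightarrow> R l \<in> carrier_mat p p"
  shows "\<exists>c. (\<forall>a. c a \<in> carrier_mat p p) \<and> (\<forall>l<n. msum p (\<lambda>a. c a * gram p W a l) {..<n} = R l)"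
proof (cases "n = 0")
  case True thus ?thesis by (intro exI[of _ "\<lambda>_. 0\<^sub>m p p"]) auto
next
  case False
  let ?G = "gram_trunc p W n"
  have G: "?G \<in> carrier_mat (n*p) (n*p)" by (simp add: gram_trunc_def)
  obtain B where B: "B \<in> carrier_mat (n*p) (n*p)" "B * ?G = 1\<^sub>m (n*p)"
    using gram_trunc_inverse[OF q, of n] False by auto
  \<comment> \<open>the rows of \<open>c\<close>, laid out blockwise, are those of \<open>R\<close> times the left inverse \<open>B\<close>\<close>
  define c where "c a = mat p p (\<lambda>(i,j). \<Sum>b<n*p. R (b div p) $$ (i, b mod p) * B $$ (b, a*p+j))" for a
  show ?thesis
  proof (intro exI[of _ c] conjI allI impI)
    show "c a \<in> carrier_mat p p" for a by (simp add: c_def)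
    fix l assume l: "l < n"
    show "msum p (\<lambda>a. c a * gram p W a l) {..<n} = R l"
    proof (rule eq_matI)
      fix i j' assume "i < dim_row (R l)" "j' < dim_col (R l)"
      hence ij: "i < p" "j' < p" using R[OF l] by auto
      define r where "r b = R (b div p) $$ (i, b mod p)" for b
      have lj: "l*p + j' < n*p" using block_index_less[OF l ij(2)] .
      have "msum p (\<lambda>a. c a * gram p W a l) {..<n} $$ (i,j') = (\<Sum>a<n. (c a * gram p W a l) $$ (i,j'))"
        using ij by simp
      also have "\<dots> = (\<Sum>a<n. \<Sum>j<p. c a $$ (i,j) * ?G $$ (a*p+j, l*p+j'))"
        using ij l p by (intro sum.cong refl) (simp del: index_mult_mat add: square_mat_mult_index[where p=p] c_def gram_trunc_index)
      also have "\<dots> = (\<Sum>a<n. \<Sum>j<p. \<Sum>b<n*p. r b * (B $$ (b, a*p+j) * ?G $$ (a*p+j, l*p+j')))"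
        using ij by (intro sum.cong refl) (simp add: c_def r_def sum_distrib_right mult.assoc)
      also have "\<dots> = (\<Sum>b<n*p. \<Sum>a<n. \<Sum>j<p. r b * (B $$ (b, a*p+j) * ?G $$ (a*p+j, l*p+j')))"
        by (rule trans[OF sum.cong[OF refl sum.swap] sum.swap])
      also have "\<dots> = (\<Sum>b<n*p. r b * (\<Sum>x<n*p. B $$ (b, x) * ?G $$ (x, l*p+j')))"
        by (intro sum.cong refl) (simp add: sum_lessThan_mult_blocks sum_distrib_left)
      also have "\<dots> = (\<Sum>b<n*p. r b * (B * ?G) $$ (b, l*p+j'))"
        using G lj by (intro sum.cong refl) (simp add: mat_mult_index_sum[OF B(1) G])
      also have "\<dots> = (\<Sum>b<n*p. if b = l*p+j' then r b else 0)"
        using lj by (intro sum.cong refl) (simp only: B(2), simp)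
      also have "\<dots> = r (l*p+j')" using lj by simp
      also have "\<dots> = R l $$ (i,j')" using p ij by (simp add: r_def)
      finally show "msum p (\<lambda>a. c a * gram p W a l) {..<n} $$ (i,j') = R l $$ (i,j')" .
    qed (use R[OF l] in auto)
  qed
qed

lemma gram_col_solvable:
  assumes q: "quasidefinite p W" and p: "0 < p" and R: "\<And>a. a < n \<Longrightarrow> R a \<in> carrier_mat p p"
  shows "\<exists>d. (\<forall>b. d b \<in> carrier_mat p p) \<and> (\<forall>a<n. msum p (\<lambda>b. gram p W a b * transpose_mat (d b)) {..<n} = R a)"
proof (cases "n = 0")
  case True thus ?thesis by (intro exI[of _ "\<lambda>_. 0\<^sub>m p p"]) auto
next
  case False
  let ?G = "gram_trunc p W n"
  have G: "?G \<in> carrier_mat (n*p) (n*p)" by (simp add: gram_trunc_def)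
  obtain B where B: "B \<in> carrier_mat (n*p) (n*p)" "?G * B = 1\<^sub>m (n*p)"
    using gram_trunc_inverse[OF q, of n] False by auto
  define d where "d b = mat p p (\<lambda>(j,j'). \<Sum>x<n*p. B $$ (b*p+j', x) * R (x div p) $$ (x mod p, j))" for b
  show ?thesis
  proof (intro exI[of _ d] conjI allI impI)
    show "d a \<in> carrier_mat p p" for a by (simp add: d_def)
    fix a assume a: "a < n"
    show "msum p (\<lambda>b. gram p W a b * transpose_mat (d b)) {..<n} = R a"
    proof (rule eq_matI)
      fix i j assume "i < dim_row (R a)" "j < dim_col (R a)"
      hence ij: "i < p" "j < p" using R[OF a] by auto
      define r where "r x = R (x div p) $$ (x mod p, j)" for x
      have ai: "a*p + i < n*p" using block_index_less[OF a ij(1)] .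
      have "msum p (\<lambda>b. gram p W a b * transpose_mat (d b)) {..<n} $$ (i,j)
          = (\<Sum>b<n. (gram p W a b * transpose_mat (d b)) $$ (i,j))"
        using ij by simp
      also have "\<dots> = (\<Sum>b<n. \<Sum>j'<p. ?G $$ (a*p+i, b*p+j') * d b $$ (j,j'))"
        using ij a p by (intro sum.cong refl) (simp del: index_mult_mat add: square_mat_mult_index[where p=p] d_def gram_trunc_index)
      also have "\<dots> = (\<Sum>b<n. \<Sum>j'<p. \<Sum>x<n*p. (?G $$ (a*p+i, b*p+j') * B $$ (b*p+j', x)) * r x)"
        using ij by (intro sum.cong refl) (simp add: d_def r_def sum_distrib_left mult.assoc)
      also have "\<dots> = (\<Sum>x<n*p. \<Sum>b<n. \<Sum>j'<p. (?G $$ (a*p+i, b*p+j') * B $$ (b*p+j', x)) * r x)"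
        by (rule trans[OF sum.cong[OF refl sum.swap] sum.swap])
      also have "\<dots> = (\<Sum>x<n*p. (\<Sum>y<n*p. ?G $$ (a*p+i, y) * B $$ (y, x)) * r x)"
        by (intro sum.cong refl) (simp add: sum_lessThan_mult_blocks sum_distrib_right)
      also have "\<dots> = (\<Sum>x<n*p. (?G * B) $$ (a*p+i, x) * r x)"
        using G ai by (intro sum.cong refl) (simp add: mat_mult_index_sum[OF G B(1)])
      also have "\<dots> = (\<Sum>x<n*p. if x = a*p+i then r x else 0)"
        using ai by (intro sum.cong refl) (simp only: B(2), auto)
      also have "\<dots> = r (a*p+i)" using ai by simp
      also have "\<dots> = R a $$ (i,j)" using p ij by (simp add: r_def)
      finally show "msum p (\<lambda>b. gram p W a b * transpose_mat (d b)) {..<n} $$ (i,j) = R a $$ (i,j)" .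
    qed (use R[OF a] in auto)
  qed
qed

lemma gram_row_nondegenerate:
  assumes q: "quasidefinite p W" and p: "0 < p" and c: "\<And>a. c a \<in> carrier_mat p p"
    and h: "\<And>l. l < n \<Longrightarrow> msum p (\<lambda>a. c a * gram p W a l) {..<n} = 0\<^sub>m p p"
    and a0: "a0 < n"
  shows "c a0 = 0\<^sub>m p p"
proof -
  have "\<exists>d. (\<forall>b. d b \<in> carrier_mat p p) \<and> (\<forall>a<n.
      msum p (\<lambda>b. gram p W a b * transpose_mat (d b)) {..<n} = (if a = a0 then 1\<^sub>m p else 0\<^sub>m p p))"
    by (rule gram_col_solvable[OF q p]) auto
  then obtain d where d: "\<And>b. d b \<in> carrier_mat p p" and dR: "\<And>a. a < n \<Longrightarrow>
      msum p (\<lambda>b. gram p W a b * transpose_mat (d b)) {..<n} = (if a = a0 then 1\<^sub>m p else 0\<^sub>m p p)"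
    by blast
  have "c a0 = msum p (\<lambda>a. c a * (if a = a0 then 1\<^sub>m p else 0\<^sub>m p p)) {..<n}"
    using a0 c by (subst msum_single[where k=a0]) auto
  also have "\<dots> = msum p (\<lambda>a. c a * msum p (\<lambda>b. gram p W a b * transpose_mat (d b)) {..<n}) {..<n}"
    by (intro msum_cong) (simp add: dR)
  also have "\<dots> = msum p (\<lambda>b. msum p (\<lambda>a. c a * gram p W a b) {..<n} * transpose_mat (d b)) {..<n}"
    using c d by (intro msum_mult_msum_assoc) auto
  also have "\<dots> = 0\<^sub>m p p"
    using d by (intro msum_zero) (simp add: h)
  finally show ?thesis .
qed

lemma gram_col_nondegenerate:
  assumes q: "quasidefinite p W" and p: "0 < p" and d: "\<And>b. d b \<in> carrier_mat p p"
    and h: "\<And>a. a < n \<Longrightarrow> msum p (\<lambda>b. gram p W a b * transpose_mat (d b)) {..<n} = 0\<^sub>m p p"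
    and b0: "b0 < n"
  shows "d b0 = 0\<^sub>m p p"
proof -
  have "\<exists>c. (\<forall>a. c a \<in> carrier_mat p p) \<and> (\<forall>l<n.
      msum p (\<lambda>a. c a * gram p W a l) {..<n} = (if l = b0 then 1\<^sub>m p else 0\<^sub>m p p))"
    by (rule gram_row_solvable[OF q p]) auto
  then obtain c where c: "\<And>a. c a \<in> carrier_mat p p" and cR: "\<And>l. l < n \<Longrightarrow>
      msum p (\<lambda>a. c a * gram p W a l) {..<n} = (if l = b0 then 1\<^sub>m p else 0\<^sub>m p p)"
    by blast
  have "transpose_mat (d b0) = msum p (\<lambda>l. (if l = b0 then 1\<^sub>m p else 0\<^sub>m p p) * transpose_mat (d l)) {..<n}"
    using b0 d by (subst msum_single[where k=b0]) auto
  also have "\<dots> = msum p (\<lambda>l. msum p (\<lambda>a. c a * gram p W a l) {..<n} * transpose_mat (d l)) {..<n}"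
    by (intro msum_cong) (simp add: cR)
  also have "\<dots> = msum p (\<lambda>a. c a * msum p (\<lambda>l. gram p W a l * transpose_mat (d l)) {..<n}) {..<n}"
    using c d by (intro msum_mult_msum_assoc[symmetric]) auto
  also have "\<dots> = 0\<^sub>m p p"
    using c by (intro msum_zero) (simp add: h)
  finally have "transpose_mat (transpose_mat (d b0)) = 0\<^sub>m p p" by simp
  thus ?thesis by simp
qed

section \<open>The block Gauss factorization\<close>

lemma gauss_factD:
  assumes "gauss_fact p W A H C"
  shows "\<And>n k. A n k \<in> carrier_mat p p" "\<And>n k. C n k \<in> carrier_mat p p" "\<And>n. H n \<in> carrier_mat p p"
    "\<And>n. A n n = 1\<^sub>m p" "\<And>n. C n n = 1\<^sub>m p"
    "\<And>n k. n < k \<Longrightarrow> A n k = 0\<^sub>m p p" "\<And>n k. n < k \<Longrightarrow> C n k = 0\<^sub>m p p"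
    "\<And>n m. msum p (\<lambda>(k,l). A n k * gram p W k l * transpose_mat (C m l)) ({..n} \<times> {..m})
            = (if n = m then H n else 0\<^sub>m p p)"
  using assms unfolding gauss_fact_def by blast+

lemma unitriangular_right_cancel:
  fixes S :: "nat \<Rightarrow> nat \<Rightarrow> 'a::comm_ring_1 mat" and k n :: nat
  assumes S: "\<And>k. S k k = 1\<^sub>m p" "\<And>k a. S k a \<in> carrier_mat p p" and Y: "\<And>b. Y b \<in> carrier_mat p p"
    and h: "\<And>k. k < n \<Longrightarrow> msum p (\<lambda>b. Y b * transpose_mat (S k b)) {..k} = 0\<^sub>m p p"
  shows "k < n \<Longrightarrow> Y k = 0\<^sub>m p p"
proof (induction k rule: less_induct)
  case (less k)
  have "msum p (\<lambda>b. Y b * transpose_mat (S k b)) {..<k} = 0\<^sub>m p p"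
    using less S Y by (intro msum_zero) auto
  with h[OF less.prems] show ?case using Y[of k] S by (simp add: msum_atMost)
qed

lemma unitriangular_left_cancel:
  fixes S :: "nat \<Rightarrow> nat \<Rightarrow> 'a::comm_ring_1 mat" and k n :: nat
  assumes S: "\<And>k. S k k = 1\<^sub>m p" "\<And>k a. S k a \<in> carrier_mat p p" and Y: "\<And>b. Y b \<in> carrier_mat p p"
    and h: "\<And>k. k < n \<Longrightarrow> msum p (\<lambda>a. S k a * Y a) {..k} = 0\<^sub>m p p"
  shows "k < n \<Longrightarrow> Y k = 0\<^sub>m p p"
proof (induction k rule: less_induct)
  case (less k)
  have "msum p (\<lambda>a. S k a * Y a) {..<k} = 0\<^sub>m p p"
    using less S Y by (intro msum_zero) auto
  with h[OF less.prems] show ?case using Y[of k] S by (simp add: msum_atMost)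
qed

lemma gram_block_zero_if_rows_orth:
  assumes A: "\<And>k. A k \<in> carrier_mat p p" and C: "\<And>l. C l \<in> carrier_mat p p"
    and orth: "\<And>l. l \<in> L \<Longrightarrow> msum p (\<lambda>k. A k * gram p W k l) K = 0\<^sub>m p p"
    and "finite K" "finite L"
  shows "msum p (\<lambda>(k,l). A k * gram p W k l * transpose_mat (C l)) (K \<times> L) = 0\<^sub>m p p"
proof -
  have "msum p (\<lambda>(k,l). A k * gram p W k l * transpose_mat (C l)) (K \<times> L)
      = msum p (\<lambda>l. msum p (\<lambda>k. A k * gram p W k l) K * transpose_mat (C l)) L"
    using A C \<open>finite K\<close> \<open>finite L\<close> by (subst msum_Sigma') (auto intro!: msum_cong simp: msum_mult_right)
  also have "\<dots> = 0\<^sub>m p p"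
    using C by (intro msum_zero) (simp add: orth)
  finally show ?thesis .
qed

lemma gram_block_zero_if_cols_orth:
  assumes A: "\<And>k. A k \<in> carrier_mat p p" and C: "\<And>l. C l \<in> carrier_mat p p"
    and orth: "\<And>k. k \<in> K \<Longrightarrow> msum p (\<lambda>l. gram p W k l * transpose_mat (C l)) L = 0\<^sub>m p p"
    and "finite K" "finite L"
  shows "msum p (\<lambda>(k,l). A k * gram p W k l * transpose_mat (C l)) (K \<times> L) = 0\<^sub>m p p"
proof -
  have "msum p (\<lambda>(k,l). A k * gram p W k l * transpose_mat (C l)) (K \<times> L)
      = msum p (\<lambda>k. A k * msum p (\<lambda>l. gram p W k l * transpose_mat (C l)) L) K"
    using A C \<open>finite K\<close> \<open>finite L\<close> by (subst msum_Sigma)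
      (auto intro!: msum_cong simp: msum_mult_left assoc_mult_mat[of _ p p _ p _ p])
  also have "\<dots> = 0\<^sub>m p p"
    using A by (intro msum_zero) (simp add: orth)
  finally show ?thesis .
qed

lemma gauss_fact_rows_orth:
  assumes gf: "gauss_fact p W A H C" and l: "l < n"
  shows "msum p (\<lambda>k. A n k * gram p W k l) {..n} = 0\<^sub>m p p"
proof -
  note g = gauss_factD[OF gf]
  define Y where "Y l = msum p (\<lambda>k. A n k * gram p W k l) {..n}" for l
  have "msum p (\<lambda>l. Y l * transpose_mat (C m l)) {..m} = 0\<^sub>m p p" if "m < n" for m
  proof -
    have "msum p (\<lambda>l. Y l * transpose_mat (C m l)) {..m}
        = msum p (\<lambda>(k,l). A n k * gram p W k l * transpose_mat (C m l)) ({..n} \<times> {..m})"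
      unfolding Y_def using g by (subst msum_Sigma') (auto intro!: msum_cong simp: msum_mult_right)
    thus ?thesis using g(8)[of n m] that by simp
  qed
  from unitriangular_right_cancel[of "C", OF g(5) g(2) _ this l] show ?thesis
    by (simp add: Y_def)
qed

lemma gauss_fact_cols_orth:
  assumes gf: "gauss_fact p W A H C" and k: "k < m"
  shows "msum p (\<lambda>l. gram p W k l * transpose_mat (C m l)) {..m} = 0\<^sub>m p p"
proof -
  note g = gauss_factD[OF gf]
  define Z where "Z k = msum p (\<lambda>l. gram p W k l * transpose_mat (C m l)) {..m}" for k
  have "msum p (\<lambda>k. A n k * Z k) {..n} = 0\<^sub>m p p" if "n < m" for n
  proof -
    have "msum p (\<lambda>k. A n k * Z k) {..n}
        = msum p (\<lambda>(k,l). A n k * gram p W k l * transpose_mat (C m l)) ({..n} \<times> {..m})"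
      unfolding Z_def using g by (subst msum_Sigma)
        (auto intro!: msum_cong simp: msum_mult_left assoc_mult_mat[of _ p p _ p _ p])
    thus ?thesis using g(8)[of n m] that by simp
  qed
  from unitriangular_left_cancel[of "A", OF g(4) g(1) _ this k] show ?thesis
    by (simp add: Z_def)
qed

lemma gauss_fact_rows_lower:
  assumes gf: "gauss_fact p W A H C" and "l < n"
  shows "msum p (\<lambda>k. A n k * gram p W k l) {..<n} = - gram p W n l"
  by (rule mat_eq_uminus_if_add_zero[where n=p and m=p])
    (use gauss_fact_rows_orth[OF assms] gauss_factD(1,4)[OF gf] in \<open>simp_all add: msum_atMost\<close>)

lemma gauss_fact_cols_lower:
  assumes gf: "gauss_fact p W A H C" and "k < m"
  shows "msum p (\<lambda>l. gram p W k l * transpose_mat (C m l)) {..<m} = - gram p W k m"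
  by (rule mat_eq_uminus_if_add_zero[where n=p and m=p])
    (use gauss_fact_cols_orth[OF assms] gauss_factD(2,5)[OF gf] in \<open>simp_all add: msum_atMost\<close>)

lemma gauss_fact_unique_rows:
  assumes q: "quasidefinite p W" and p: "0 < p"
    and gf: "gauss_fact p W A H C" and gf': "gauss_fact p W A' H' C'"
  shows "A n k = A' n k"
proof (cases "k < n")
  case True
  note g = gauss_factD[OF gf] and g' = gauss_factD[OF gf']
  have diff_orth: "msum p (\<lambda>a. (A n a - A' n a) * gram p W a l) {..<n} = 0\<^sub>m p p" if "l < n" for l
  proof -
    have "msum p (\<lambda>a. (A n a - A' n a) * gram p W a l) {..<n}
        = msum p (\<lambda>a. A n a * gram p W a l) {..<n} - msum p (\<lambda>a. A' n a * gram p W a l) {..<n}"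
      using g(1) g'(1) by (subst msum_diff[symmetric])
        (auto simp: minus_mult_distrib_mat[where nr=p and n=p and nc=p] intro!: msum_cong)
    thus ?thesis by (simp add: gauss_fact_rows_lower[OF gf that] gauss_fact_rows_lower[OF gf' that])
  qed
  have "A n k - A' n k = 0\<^sub>m p p"
    by (rule gram_row_nondegenerate[OF q p _ diff_orth True]) (simp add: g(1) g'(1))
  thus ?thesis by (rule mat_eq_if_diff_zero[OF _ g(1) g'(1)])
qed (use gauss_factD(4,6)[OF gf] gauss_factD(4,6)[OF gf'] in \<open>cases "k = n"; auto\<close>)

lemma gauss_fact_unique_cols:
  assumes q: "quasidefinite p W" and p: "0 < p"
    and gf: "gauss_fact p W A H C" and gf': "gauss_fact p W A' H' C'"
  shows "C m l = C' m l"
proof (cases "l < m")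
  case True
  note g = gauss_factD[OF gf] and g' = gauss_factD[OF gf']
  have diff_orth: "msum p (\<lambda>b. gram p W k b * transpose_mat (C m b - C' m b)) {..<m} = 0\<^sub>m p p"
    if "k < m" for k
  proof -
    have "msum p (\<lambda>b. gram p W k b * transpose_mat (C m b - C' m b)) {..<m}
        = msum p (\<lambda>b. gram p W k b * transpose_mat (C m b)) {..<m}
          - msum p (\<lambda>b. gram p W k b * transpose_mat (C' m b)) {..<m}"
      using g(2) g'(2) by (subst msum_diff[symmetric]) (auto simp: transpose_minus[where nr=p and nc=p]
          mult_minus_distrib_mat[where nr=p and n=p and nc=p] intro!: msum_cong)
    thus ?thesis by (simp add: gauss_fact_cols_lower[OF gf that] gauss_fact_cols_lower[OF gf' that])
  qed
  have "C m l - C' m l = 0\<^sub>m p p"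
    by (rule gram_col_nondegenerate[OF q p _ diff_orth True]) (simp add: g(2) g'(2))
  thus ?thesis by (rule mat_eq_if_diff_zero[OF _ g(2) g'(2)])
qed (use gauss_factD(5,7)[OF gf] gauss_factD(5,7)[OF gf'] in \<open>cases "l = m"; auto\<close>)

lemma gauss_fact_unique:
  assumes q: "quasidefinite p W" and p: "0 < p"
    and gf: "gauss_fact p W A H C" and gf': "gauss_fact p W A' H' C'"
  shows "A = A' \<and> H = H' \<and> C = C'"
proof -
  have "A = A'" "C = C'"
    using gauss_fact_unique_rows[OF assms] gauss_fact_unique_cols[OF assms] by blast+
  moreover have "H n = H' n" for n
    using gauss_factD(8)[OF gf, of n n] gauss_factD(8)[OF gf', of n n] \<open>A = A'\<close> \<open>C = C'\<close> by simp
  ultimately show ?thesis by auto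
qed

lemma gauss_fact_if_orth:
  assumes A: "\<And>n k. A n k \<in> carrier_mat p p" "\<And>n. A n n = 1\<^sub>m p" "\<And>n k. n < k \<Longrightarrow> A n k = 0\<^sub>m p p"
    and C: "\<And>n k. C n k \<in> carrier_mat p p" "\<And>n. C n n = 1\<^sub>m p" "\<And>n k. n < k \<Longrightarrow> C n k = 0\<^sub>m p p"
    and rows: "\<And>n l. l < n \<Longrightarrow> msum p (\<lambda>k. A n k * gram p W k l) {..n} = 0\<^sub>m p p"
    and cols: "\<And>k m. k < m \<Longrightarrow> msum p (\<lambda>l. gram p W k l * transpose_mat (C m l)) {..m} = 0\<^sub>m p p"
  shows "gauss_fact p W A
    (\<lambda>n. msum p (\<lambda>(k,l). A n k * gram p W k l * transpose_mat (C n l)) ({..n} \<times> {..n})) C"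
proof -
  have "msum p (\<lambda>(k,l). A n k * gram p W k l * transpose_mat (C m l)) ({..n} \<times> {..m}) = 0\<^sub>m p p"
    if "n \<noteq> m" for n m
  proof (cases n m rule: linorder_cases)
    case less
    thus ?thesis using A C cols by (auto intro!: gram_block_zero_if_cols_orth)
  next
    case greater
    thus ?thesis using A C rows by (auto intro!: gram_block_zero_if_rows_orth)
  qed (use that in simp)
  thus ?thesis unfolding gauss_fact_def using A C by simp
qed

lemma gauss_fact_exists:
  assumes q: "quasidefinite p W" and p: "0 < p"
  shows "\<exists>A H C. gauss_fact p W A H C"
proof -
  have "\<forall>n. \<exists>c. (\<forall>a. c a \<in> carrier_mat p p) \<and>
      (\<forall>l<n. msum p (\<lambda>a. c a * gram p W a l) {..<n} = - gram p W n l)"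
    by (intro allI gram_row_solvable[OF q p]) simp
  then obtain f where f: "\<And>n a. f n a \<in> carrier_mat p p"
    and f_rows: "\<And>n l. l < n \<Longrightarrow> msum p (\<lambda>a. f n a * gram p W a l) {..<n} = - gram p W n l"
    by (auto dest!: choice)
  have "\<forall>m. \<exists>d. (\<forall>b. d b \<in> carrier_mat p p) \<and>
      (\<forall>k<m. msum p (\<lambda>b. gram p W k b * transpose_mat (d b)) {..<m} = - gram p W k m)"
    by (intro allI gram_col_solvable[OF q p]) simp
  then obtain g where g: "\<And>m b. g m b \<in> carrier_mat p p"
    and g_cols: "\<And>m k. k < m \<Longrightarrow> msum p (\<lambda>b. gram p W k b * transpose_mat (g m b)) {..<m} = - gram p W k m"
    by (auto dest!: choice)
  define A where "A n k = (if k = n then 1\<^sub>m p else if k < n then f n k else 0\<^sub>m p p)" for n k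
  define C where "C m l = (if l = m then 1\<^sub>m p else if l < m then g m l else 0\<^sub>m p p)" for m l
  have A_carrier: "A n k \<in> carrier_mat p p" for n k using f by (simp add: A_def)
  have C_carrier: "C n k \<in> carrier_mat p p" for n k using g by (simp add: C_def)
  have "msum p (\<lambda>k. A n k * gram p W k l) {..n} = 0\<^sub>m p p" if "l < n" for n l
  proof -
    have "msum p (\<lambda>k. A n k * gram p W k l) {..<n} = msum p (\<lambda>k. f n k * gram p W k l) {..<n}"
      by (intro msum_cong) (simp add: A_def)
    thus ?thesis using A_carrier f_rows[OF that] by (simp add: msum_atMost A_def)
  qed
  moreover have "msum p (\<lambda>l. gram p W k l * transpose_mat (C m l)) {..m} = 0\<^sub>m p p" if "k < m" for k m
  proof -
    have "msum p (\<lambda>l. gram p W k l * transpose_mat (C m l)) {..<m}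
        = msum p (\<lambda>l. gram p W k l * transpose_mat (g m l)) {..<m}"
      by (intro msum_cong) (simp add: C_def)
    thus ?thesis using C_carrier g_cols[OF that] by (simp add: msum_atMost C_def)
  qed
  ultimately have "gauss_fact p W A (\<lambda>n. msum p (\<lambda>(k,l). A n k * gram p W k l * transpose_mat (C n l))
      ({..n} \<times> {..n})) C"
    using A_carrier C_carrier by (intro gauss_fact_if_orth) (auto simp: A_def C_def)
  thus ?thesis by blast
qed

lemma gauss_fact_gfact:
  assumes q: "quasidefinite p W" and p: "0 < p"
  shows "gauss_fact p W (S1 p W) (Hn p W) (S2 p W)"
proof -
  let ?P = "\<lambda>(A, H, C). gauss_fact p W A H C"
  obtain A H C where gf: "gauss_fact p W A H C" using gauss_fact_exists[OF q p] by blast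
  have "\<exists>!t. ?P t"
  proof (rule ex1I[of _ "(A, H, C)"])
    show "?P t \<Longrightarrow> t = (A, H, C)" for t
      using gauss_fact_unique[OF q p _ gf] by (cases t) auto
  qed (use gf in simp)
  hence "?P (gfact p W)" unfolding gfact_def by (rule theI')
  thus ?thesis unfolding S1_def Hn_def S2_def by (cases "gfact p W") auto
qed

lemma gauss_fact_Hn_eq:
  assumes gf: "gauss_fact p W A H C"
  shows "H n = msum p (\<lambda>l. gram p W n l * transpose_mat (C n l)) {..n}"
proof -
  note g = gauss_factD[OF gf]
  define Z where "Z k = msum p (\<lambda>l. gram p W k l * transpose_mat (C n l)) {..n}" for k
  have "H n = msum p (\<lambda>k. A n k * Z k) {..n}"
    using g(8)[of n n] g unfolding Z_def by (subst (asm) msum_Sigma)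
      (auto intro!: msum_cong simp: msum_mult_left assoc_mult_mat[of _ p p _ p _ p])
  also have "\<dots> = A n n * Z n"
    using g by (intro msum_single) (auto simp: Z_def gauss_fact_cols_orth[OF gf])
  finally show ?thesis using g(4) by (simp add: Z_def)
qed

text \<open>If \<open>\<Sum>\<^sub>a\<^sub>\<le>\<^sub>n c\<^sub>a G\<^sub>a\<^sub>,\<^sub>l = \<delta>\<^sub>l\<^sub>,\<^sub>n I\<close>, then \<open>c\<^sub>n\<close> is a left inverse of \<open>H\<^sub>n\<close>.\<close>
lemma gauss_fact_Hn_left_inverse:
  assumes q: "quasidefinite p W" and p: "0 < p" and gf: "gauss_fact p W A H C"
  shows "\<exists>X. X \<in> carrier_mat p p \<and> X * H n = 1\<^sub>m p"
proof -
  note g = gauss_factD[OF gf]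
  have "\<exists>c. (\<forall>a. c a \<in> carrier_mat p p) \<and> (\<forall>l<Suc n.
      msum p (\<lambda>a. c a * gram p W a l) {..<Suc n} = (if l = n then 1\<^sub>m p else 0\<^sub>m p p))"
    by (rule gram_row_solvable[OF q p]) auto
  then obtain c where c: "\<And>a. c a \<in> carrier_mat p p" and c_rows: "\<And>l. l \<le> n \<Longrightarrow>
      msum p (\<lambda>a. c a * gram p W a l) {..n} = (if l = n then 1\<^sub>m p else 0\<^sub>m p p)"
    unfolding lessThan_Suc_atMost less_Suc_eq_le by blast
  define Z where "Z k = msum p (\<lambda>l. gram p W k l * transpose_mat (C n l)) {..n}" for k
  have "c n * H n = msum p (\<lambda>a. c a * Z a) {..n}"
    using c g by (subst msum_single[where k=n])
      (auto simp: Z_def gauss_fact_cols_orth[OF gf] gauss_fact_Hn_eq[OF gf])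
  also have "\<dots> = msum p (\<lambda>l. msum p (\<lambda>a. c a * gram p W a l) {..n} * transpose_mat (C n l)) {..n}"
    unfolding Z_def using c g(2) by (intro msum_mult_msum_assoc) auto
  also have "\<dots> = 1\<^sub>m p"
    using g(2,5) by (subst msum_single[where k=n]) (auto simp: c_rows)
  finally show ?thesis using c by blast
qed

lemma minv_Hn:
  assumes q: "quasidefinite p W" and p: "0 < p"
  shows "minv (Hn p W n) \<in> carrier_mat p p" "Hn p W n * minv (Hn p W n) = 1\<^sub>m p"
    "minv (Hn p W n) * Hn p W n = 1\<^sub>m p"
proof -
  note gf = gauss_fact_gfact[OF q p]
  obtain X where X: "X \<in> carrier_mat p p" "X * Hn p W n = 1\<^sub>m p"
    using gauss_fact_Hn_left_inverse[OF q p gf] by blast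
  have H: "Hn p W n \<in> carrier_mat p p" by (rule gauss_factD(3)[OF gf])
  have "det X * det (Hn p W n) = 1" using det_mult[OF X(1) H] X(2) by simp
  hence "det (Hn p W n) \<noteq> 0" by auto
  from minv_inverse[OF H this] show "minv (Hn p W n) \<in> carrier_mat p p"
    "Hn p W n * minv (Hn p W n) = 1\<^sub>m p" "minv (Hn p W n) * Hn p W n = 1\<^sub>m p" by auto
qed

section \<open>Biorthogonality of the matrix polynomials\<close>

lemma P1_carrier[simp]: "P1 p W n \<in> carrier_mat p p"
  by (simp add: P1_def)

lemma P2_carrier[simp]: "P2 p W n \<in> carrier_mat p p"
  by (simp add: P2_def)

lemma mdegree_less_P1: "k < n \<Longrightarrow> mdegree_less p (P1 p W k) n"
  unfolding P1_def by (rule mdegree_less_mono[OF mdegree_less_mpoly_of]) simp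

lemma mdegree_less_P2: "k < n \<Longrightarrow> mdegree_less p (P2 p W k) n"
  unfolding P2_def by (rule mdegree_less_mono[OF mdegree_less_mpoly_of]) simp

lemma mdegree_less_P1_diff:
  assumes "quasidefinite p W" "quasidefinite p W'" "0 < p"
  shows "mdegree_less p (P1 p W n - P1 p W' n) n"
  unfolding P1_def using gauss_factD(4)[OF gauss_fact_gfact] assms by (simp add: mdegree_less_mpoly_of_diff)

lemma mdegree_less_P2_diff:
  assumes "quasidefinite p W" "quasidefinite p W'" "0 < p"
  shows "mdegree_less p (P2 p W n - P2 p W' n) n"
  unfolding P2_def using gauss_factD(5)[OF gauss_fact_gfact] assms by (simp add: mdegree_less_mpoly_of_diff)

lemma mform_P1_P2:
  assumes "quasidefinite p W" "0 < p"
  shows "mform p W (P1 p W n) (P2 p W m) = (if n = m then Hn p W n else 0\<^sub>m p p)"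
  using gauss_factD[OF gauss_fact_gfact[OF assms]] unfolding P1_def P2_def
  by (subst mform_mpoly_of) auto

lemma mform_P1_lower_degree:
  assumes q: "quasidefinite p W" and p: "0 < p" and Q: "Q \<in> carrier_mat p p" "mdegree_less p Q n"
  shows "mform p W (P1 p W n) Q = 0\<^sub>m p p"
proof -
  note gf = gauss_fact_gfact[OF q p]
  note g = gauss_factD[OF gf]
  have "mform p W (P1 p W n) Q
      = msum p (\<lambda>(a,b). S1 p W n a * gram p W a b * transpose_mat (mcoeff p Q b)) ({..n} \<times> {..<n})"
    unfolding P1_def mform_eq_msum_gram[OF mpoly_of_carrier mdegree_less_mpoly_of Q] lessThan_Suc_atMost
    using g(1) by (intro msum_cong) (auto simp: mcoeff_mpoly_of)
  also have "\<dots> = 0\<^sub>m p p"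
    using g(1) by (intro gram_block_zero_if_rows_orth) (auto simp: gauss_fact_rows_orth[OF gf])
  finally show ?thesis .
qed

lemma mform_lower_degree_P2:
  assumes q: "quasidefinite p W" and p: "0 < p" and P: "P \<in> carrier_mat p p" "mdegree_less p P m"
  shows "mform p W P (P2 p W m) = 0\<^sub>m p p"
proof -
  note gf = gauss_fact_gfact[OF q p]
  note g = gauss_factD[OF gf]
  have "mform p W P (P2 p W m)
      = msum p (\<lambda>(a,b). mcoeff p P a * gram p W a b * transpose_mat (S2 p W m b)) ({..<m} \<times> {..m})"
    unfolding P2_def mform_eq_msum_gram[OF P mpoly_of_carrier mdegree_less_mpoly_of] lessThan_Suc_atMost
    using g(2) by (intro msum_cong) (auto simp: mcoeff_mpoly_of)
  also have "\<dots> = 0\<^sub>m p p"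
    using g(2) by (intro gram_block_zero_if_cols_orth) (auto simp: gauss_fact_cols_orth[OF gf])
  finally show ?thesis .
qed

lemma mpoly_eq_zero_if_orth_P2:
  assumes q: "quasidefinite p W" and p: "0 < p" and D: "D \<in> carrier_mat p p" "mdegree_less p D n"
    and orth: "\<And>k. k < n \<Longrightarrow> mform p W D (P2 p W k) = 0\<^sub>m p p"
  shows "D = 0\<^sub>m p p"
proof -
  note gf = gauss_fact_gfact[OF q p]
  note g = gauss_factD[OF gf]
  define Y where "Y b = msum p (\<lambda>a. mcoeff p D a * gram p W a b) {..<n}" for b
  have "msum p (\<lambda>b. Y b * transpose_mat (S2 p W k b)) {..k} = 0\<^sub>m p p" if k: "k < n" for k
  proof -
    have "mform p W D (P2 p W k)
        = msum p (\<lambda>(a,b). mcoeff p D a * gram p W a b * transpose_mat (S2 p W k b)) ({..<n} \<times> {..k})"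
      unfolding P2_def mform_eq_msum_gram[OF D mpoly_of_carrier mdegree_less_mpoly_of] lessThan_Suc_atMost
      using g(2) by (intro msum_cong) (auto simp: mcoeff_mpoly_of)
    also have "\<dots> = msum p (\<lambda>b. Y b * transpose_mat (S2 p W k b)) {..k}"
      unfolding Y_def using g(2) by (subst msum_Sigma') (auto intro!: msum_cong simp: msum_mult_right)
    finally show ?thesis using orth[OF k] by simp
  qed
  from unitriangular_right_cancel[of "S2 p W", OF g(5) g(2) _ this]
  have Y0: "Y b = 0\<^sub>m p p" if "b < n" for b
    using that by (simp add: Y_def)
  have "mcoeff p D a = 0\<^sub>m p p" if "a < n" for a
    by (rule gram_row_nondegenerate[OF q p mcoeff_carrier _ that]) (simp add: Y0[unfolded Y_def])
  with mcoeff_eq_zero_if_mdegree_less[OF D(2)] show ?thesis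
    by (intro mat_poly_eq_zeroI[OF D(1)]) (meson not_le)
qed

lemma mpoly_eq_zero_if_orth_P1:
  assumes q: "quasidefinite p W" and p: "0 < p" and D: "D \<in> carrier_mat p p" "mdegree_less p D n"
    and orth: "\<And>k. k < n \<Longrightarrow> mform p W (P1 p W k) D = 0\<^sub>m p p"
  shows "D = 0\<^sub>m p p"
proof -
  note gf = gauss_fact_gfact[OF q p]
  note g = gauss_factD[OF gf]
  define Z where "Z a = msum p (\<lambda>b. gram p W a b * transpose_mat (mcoeff p D b)) {..<n}" for a
  have "msum p (\<lambda>a. S1 p W k a * Z a) {..k} = 0\<^sub>m p p" if k: "k < n" for k
  proof -
    have "mform p W (P1 p W k) D
        = msum p (\<lambda>(a,b). S1 p W k a * gram p W a b * transpose_mat (mcoeff p D b)) ({..k} \<times> {..<n})"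
      unfolding P1_def mform_eq_msum_gram[OF mpoly_of_carrier mdegree_less_mpoly_of D] lessThan_Suc_atMost
      using g(1) by (intro msum_cong) (auto simp: mcoeff_mpoly_of)
    also have "\<dots> = msum p (\<lambda>a. S1 p W k a * Z a) {..k}"
      unfolding Z_def using g(1) by (subst msum_Sigma)
        (auto intro!: msum_cong simp: msum_mult_left assoc_mult_mat[of _ p p _ p _ p])
    finally show ?thesis using orth[OF k] by simp
  qed
  from unitriangular_left_cancel[of "S1 p W", OF g(4) g(1) _ this]
  have Z0: "Z a = 0\<^sub>m p p" if "a < n" for a
    using that by (simp add: Z_def)
  have "mcoeff p D b = 0\<^sub>m p p" if "b < n" for b
    by (rule gram_col_nondegenerate[OF q p mcoeff_carrier _ that]) (simp add: Z0[unfolded Z_def])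
  with mcoeff_eq_zero_if_mdegree_less[OF D(2)] show ?thesis
    by (intro mat_poly_eq_zeroI[OF D(1)]) (meson not_le)
qed

lemma mform_msum_P1_P2:
  assumes q: "quasidefinite p W" and p: "0 < p" and C: "\<And>j. C j \<in> carrier_mat p p" and "k < n"
  shows "mform p W (msum p (\<lambda>j. mconst (C j) * P1 p W j) {..<n}) (P2 p W k) = C k * Hn p W k"
proof -
  have "mform p W (msum p (\<lambda>j. mconst (C j) * P1 p W j) {..<n}) (P2 p W k)
      = msum p (\<lambda>j. C j * mform p W (P1 p W j) (P2 p W k)) {..<n}"
    using C by (intro mform_msum_mconst_mult_left) auto
  also have "\<dots> = C k * Hn p W k"
    using assms gauss_factD(3)[OF gauss_fact_gfact[OF q p]]
    by (subst msum_single[where k=k]) (auto simp: mform_P1_P2)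
  finally show ?thesis .
qed

lemma mform_P1_msum_P2:
  assumes q: "quasidefinite p W" and p: "0 < p" and C: "\<And>j. C j \<in> carrier_mat p p" and "k < n"
  shows "mform p W (P1 p W k) (msum p (\<lambda>j. mconst (C j) * P2 p W j) {..<n}) = Hn p W k * transpose_mat (C k)"
proof -
  have "mform p W (P1 p W k) (msum p (\<lambda>j. mconst (C j) * P2 p W j) {..<n})
      = msum p (\<lambda>j. mform p W (P1 p W k) (P2 p W j) * transpose_mat (C j)) {..<n}"
    using C by (intro mform_msum_mconst_mult_right) auto
  also have "\<dots> = Hn p W k * transpose_mat (C k)"
    using assms gauss_factD(3)[OF gauss_fact_gfact[OF q p]]
    by (subst msum_single[where k=k]) (auto simp: mform_P1_P2)
  finally show ?thesis .
qed

lemma mpoly_expansion_P1: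
  assumes q: "quasidefinite p W" and p: "0 < p" and D: "D \<in> carrier_mat p p" "mdegree_less p D n"
  shows "D = msum p (\<lambda>k. mconst (mform p W D (P2 p W k) * minv (Hn p W k)) * P1 p W k) {..<n}"
    (is "D = ?S")
proof -
  note H = minv_Hn[OF q p]
  have "D - ?S = 0\<^sub>m p p"
  proof (rule mpoly_eq_zero_if_orth_P2[OF q p])
    show "mdegree_less p (D - ?S) n"
      using D H by (intro mdegree_less_diff mdegree_less_msum mdegree_less_mconst_mult mdegree_less_P1)
        auto
    fix k assume "k < n"
    have "mform p W ?S (P2 p W k) = mform p W D (P2 p W k) * minv (Hn p W k) * Hn p W k"
      using H \<open>k < n\<close> by (intro mform_msum_P1_P2[OF q p]) auto
    also have "\<dots> = mform p W D (P2 p W k)"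
      using H gauss_factD(3)[OF gauss_fact_gfact[OF q p]] by (simp add: assoc_mult_mat[of _ p p _ p _ p])
    finally show "mform p W (D - ?S) (P2 p W k) = 0\<^sub>m p p"
      using D by (simp add: mform_diff_left)
  qed (use D in simp)
  thus ?thesis by (rule mat_eq_if_diff_zero[OF _ D(1) msum_carrier])
qed

lemma mpoly_expansion_P2:
  assumes q: "quasidefinite p W" and p: "0 < p" and D: "D \<in> carrier_mat p p" "mdegree_less p D n"
  shows "D = msum p (\<lambda>k. mconst (transpose_mat (minv (Hn p W k) * mform p W (P1 p W k) D)) * P2 p W k) {..<n}"
    (is "D = ?S")
proof -
  note H = minv_Hn[OF q p]
  have "D - ?S = 0\<^sub>m p p"
  proof (rule mpoly_eq_zero_if_orth_P1[OF q p])
    show "mdegree_less p (D - ?S) n"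
      using D H by (intro mdegree_less_diff mdegree_less_msum mdegree_less_mconst_mult mdegree_less_P2)
        auto
    fix k assume "k < n"
    have "mform p W (P1 p W k) ?S = Hn p W k * (minv (Hn p W k) * mform p W (P1 p W k) D)"
      using H \<open>k < n\<close> by (subst mform_P1_msum_P2[OF q p]) auto
    also have "\<dots> = mform p W (P1 p W k) D"
      using H gauss_factD(3)[OF gauss_fact_gfact[OF q p]] by (simp add: assoc_mult_mat[of _ p p _ p _ p, symmetric])
    finally show "mform p W (P1 p W k) (D - ?S) = 0\<^sub>m p p"
      using D by (simp add: mform_diff_right)
  qed (use D in simp)
  thus ?thesis by (rule mat_eq_if_diff_zero[OF _ D(1) msum_carrier])
qed

section \<open>Perturbation by an additive kernel\<close>

lemma P1_kadd:
  assumes p: "0 < p" and qu: "quasidefinite p u" and qw: "quasidefinite p (kadd p u v)"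
  shows "P1 p (kadd p u v) n = P1 p u n
    - msum p (\<lambda>k. mconst (mform p v (P1 p (kadd p u v) n) (P2 p u k) * minv (Hn p u k)) * P1 p u k) {..<n}"
proof -
  let ?Ph = "P1 p (kadd p u v) n"
  have "P1 p u n - ?Ph
      = msum p (\<lambda>k. mconst (mform p u (P1 p u n - ?Ph) (P2 p u k) * minv (Hn p u k)) * P1 p u k) {..<n}"
    using mdegree_less_P1_diff[OF qu qw p] by (intro mpoly_expansion_P1[OF qu p]) simp_all
  also have "\<dots> = msum p (\<lambda>k. mconst (mform p v ?Ph (P2 p u k) * minv (Hn p u k)) * P1 p u k) {..<n}"
  proof (rule msum_cong)
    fix k assume "k \<in> {..<n}"
    have "mform p (kadd p u v) ?Ph (P2 p u k) = 0\<^sub>m p p"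
      using \<open>k \<in> {..<n}\<close> by (intro mform_P1_lower_degree[OF qw p]) (simp_all add: mdegree_less_P2)
    hence "mform p u ?Ph (P2 p u k) + mform p v ?Ph (P2 p u k) = 0\<^sub>m p p"
      by (simp add: mform_kadd)
    hence "mform p u ?Ph (P2 p u k) = - mform p v ?Ph (P2 p u k)"
      by (rule mat_eq_uminus_if_add_zero) simp_all
    moreover have "mform p u (P1 p u n) (P2 p u k) = 0\<^sub>m p p"
      using \<open>k \<in> {..<n}\<close> by (simp add: mform_P1_P2[OF qu p])
    ultimately have "mform p u (P1 p u n - ?Ph) (P2 p u k) = mform p v ?Ph (P2 p u k)"
      by (simp add: mform_diff_left)
    thus "mconst (mform p u (P1 p u n - ?Ph) (P2 p u k) * minv (Hn p u k)) * P1 p u k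
        = mconst (mform p v ?Ph (P2 p u k) * minv (Hn p u k)) * P1 p u k" by simp
  qed
  finally show ?thesis by (rule mat_eq_diff_if_diff_eq[where n=p and m=p]) simp_all
qed

lemma P2_kadd:
  assumes p: "0 < p" and qu: "quasidefinite p u" and qw: "quasidefinite p (kadd p u v)"
  shows "P2 p (kadd p u v) n = P2 p u n - msum p (\<lambda>k. mconst (transpose_mat
      (minv (Hn p u k) * mform p v (P1 p u k) (P2 p (kadd p u v) n))) * P2 p u k) {..<n}"
proof -
  let ?Qh = "P2 p (kadd p u v) n"
  have "P2 p u n - ?Qh = msum p (\<lambda>k. mconst (transpose_mat
      (minv (Hn p u k) * mform p u (P1 p u k) (P2 p u n - ?Qh))) * P2 p u k) {..<n}"
    using mdegree_less_P2_diff[OF qu qw p] by (intro mpoly_expansion_P2[OF qu p]) simp_all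
  also have "\<dots> = msum p (\<lambda>k. mconst (transpose_mat
      (minv (Hn p u k) * mform p v (P1 p u k) ?Qh)) * P2 p u k) {..<n}"
  proof (rule msum_cong)
    fix k assume "k \<in> {..<n}"
    have "mform p (kadd p u v) (P1 p u k) ?Qh = 0\<^sub>m p p"
      using \<open>k \<in> {..<n}\<close> by (intro mform_lower_degree_P2[OF qw p]) (simp_all add: mdegree_less_P1)
    hence "mform p u (P1 p u k) ?Qh + mform p v (P1 p u k) ?Qh = 0\<^sub>m p p"
      by (simp add: mform_kadd)
    hence "mform p u (P1 p u k) ?Qh = - mform p v (P1 p u k) ?Qh"
      by (rule mat_eq_uminus_if_add_zero) simp_all
    moreover have "mform p u (P1 p u k) (P2 p u n) = 0\<^sub>m p p"
      using \<open>k \<in> {..<n}\<close> by (simp add: mform_P1_P2[OF qu p])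
    ultimately have "mform p u (P1 p u k) (P2 p u n - ?Qh) = mform p v (P1 p u k) ?Qh"
      by (simp add: mform_diff_right)
    thus "mconst (transpose_mat (minv (Hn p u k) * mform p u (P1 p u k) (P2 p u n - ?Qh))) * P2 p u k
        = mconst (transpose_mat (minv (Hn p u k) * mform p v (P1 p u k) ?Qh)) * P2 p u k" by simp
  qed
  finally show ?thesis by (rule mat_eq_diff_if_diff_eq[where n=p and m=p]) simp_all
qed

lemma transpose_msum_mult_mconst:
  assumes "\<And>k. Q k \<in> carrier_mat p p" "\<And>k. C k \<in> carrier_mat p p"
  shows "transpose_mat (msum p (\<lambda>k. transpose_mat (Q k) * mconst (C k)) K)
       = msum p (\<lambda>k. mconst (transpose_mat (C k)) * Q k) K"
  using assms by (subst transpose_msum[where p=p])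
    (auto intro!: msum_cong simp: transpose_mult[of _ p p _ p] transpose_mconst)

lemma meval_P1_kadd:
  assumes p: "0 < p" and qu: "quasidefinite p u" and qw: "quasidefinite p (kadd p u v)"
  shows "meval (P1 p (kadd p u v) n) z
    = meval (P1 p u n) z - mform p v (P1 p (kadd p u v) n) (transpose_mat (Kprev_zy p u n z))"
proof -
  let ?Ph = "P1 p (kadd p u v) n" and ?V = "\<lambda>k. mform p v (P1 p (kadd p u v) n) (P2 p u k)"
  note H = minv_Hn[OF qu p]
  have "mform p v ?Ph (transpose_mat (Kprev_zy p u n z))
      = msum p (\<lambda>k. ?V k * (minv (Hn p u k) * meval (P1 p u k) z)) {..<n}"
    unfolding Kprev_zy_def using H
    by (simp add: transpose_msum_mult_mconst mform_msum_mconst_mult_right)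
  also have "\<dots> = meval (msum p (\<lambda>k. mconst (?V k * minv (Hn p u k)) * P1 p u k) {..<n}) z"
    using H by (simp add: meval_msum_mconst_mult assoc_mult_mat[of _ p p _ p _ p])
  finally show ?thesis
    using H by (subst P1_kadd[OF assms]) (simp add: meval_diff[where p=p])
qed

lemma transpose_meval_P2_kadd:
  assumes p: "0 < p" and qu: "quasidefinite p u" and qw: "quasidefinite p (kadd p u v)"
  shows "transpose_mat (meval (P2 p (kadd p u v) n) z)
    = transpose_mat (meval (P2 p u n) z) - mform p v (Kprev_xz p u n z) (P2 p (kadd p u v) n)"
proof -
  let ?Qh = "P2 p (kadd p u v) n" and ?V = "\<lambda>k. mform p v (P1 p u k) (P2 p (kadd p u v) n)"
  note H = minv_Hn[OF qu p]
  have "mform p v (Kprev_xz p u n z) ?Qh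
      = msum p (\<lambda>k. transpose_mat (meval (P2 p u k) z) * minv (Hn p u k) * ?V k) {..<n}"
    unfolding Kprev_xz_def using H by (simp add: mform_msum_mconst_mult_left)
  also have "\<dots> = transpose_mat (meval (msum p (\<lambda>k.
      mconst (transpose_mat (minv (Hn p u k) * ?V k)) * P2 p u k) {..<n}) z)"
    using H by (simp add: meval_msum_mconst_mult transpose_msum[where p=p] transpose_mult[of _ p p _ p]
        assoc_mult_mat[of _ p p _ p _ p] cong: msum_cong)
  finally show ?thesis
    using H by (subst P2_kadd[OF assms]) (simp add: meval_diff[where p=p] transpose_minus[of _ p p])
qed

lemma mform_P1_eq_if_mdegree_less_diff:
  assumes q: "quasidefinite p W" and p: "0 < p" and Q: "Q \<in> carrier_mat p p" "Q' \<in> carrier_mat p p"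
    and "mdegree_less p (Q - Q') n"
  shows "mform p W (P1 p W n) Q = mform p W (P1 p W n) Q'"
proof (rule mat_eq_if_diff_zero)
  show "mform p W (P1 p W n) Q - mform p W (P1 p W n) Q' = 0\<^sub>m p p"
    using mform_P1_lower_degree[OF q p _ assms(5)] Q by (simp add: mform_diff_right)
qed simp_all

lemma mform_P2_eq_if_mdegree_less_diff:
  assumes q: "quasidefinite p W" and p: "0 < p" and P: "P \<in> carrier_mat p p" "P' \<in> carrier_mat p p"
    and "mdegree_less p (P - P') n"
  shows "mform p W P (P2 p W n) = mform p W P' (P2 p W n)"
proof (rule mat_eq_if_diff_zero)
  show "mform p W P (P2 p W n) - mform p W P' (P2 p W n) = 0\<^sub>m p p"
    using mform_lower_degree_P2[OF q p _ assms(5)] P by (simp add: mform_diff_left)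
qed simp_all

lemma Hn_kadd:
  assumes p: "0 < p" and qu: "quasidefinite p u" and qw: "quasidefinite p (kadd p u v)"
  shows "Hn p (kadd p u v) n = Hn p u n + mform p v (P1 p (kadd p u v) n) (P2 p u n)"
    "Hn p (kadd p u v) n = Hn p u n + mform p v (P1 p u n) (P2 p (kadd p u v) n)"
proof -
  let ?w = "kadd p u v"
  have "Hn p ?w n = mform p ?w (P1 p ?w n) (P2 p ?w n)"
    by (simp add: mform_P1_P2[OF qw p])
  also have "\<dots> = mform p ?w (P1 p ?w n) (P2 p u n)"
    by (rule mform_P1_eq_if_mdegree_less_diff[OF qw p _ _ mdegree_less_P2_diff[OF qw qu p]]) simp_all
  also have "\<dots> = mform p u (P1 p ?w n) (P2 p u n) + mform p v (P1 p ?w n) (P2 p u n)"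
    by (rule mform_kadd)
  also have "mform p u (P1 p ?w n) (P2 p u n) = mform p u (P1 p u n) (P2 p u n)"
    by (rule mform_P2_eq_if_mdegree_less_diff[OF qu p _ _ mdegree_less_P1_diff[OF qw qu p]]) simp_all
  finally show "Hn p ?w n = Hn p u n + mform p v (P1 p ?w n) (P2 p u n)"
    by (simp add: mform_P1_P2[OF qu p])
next
  let ?w = "kadd p u v"
  have "Hn p ?w n = mform p ?w (P1 p ?w n) (P2 p ?w n)"
    by (simp add: mform_P1_P2[OF qw p])
  also have "\<dots> = mform p ?w (P1 p u n) (P2 p ?w n)"
    by (rule mform_P2_eq_if_mdegree_less_diff[OF qw p _ _ mdegree_less_P1_diff[OF qw qu p]]) simp_all
  also have "\<dots> = mform p u (P1 p u n) (P2 p ?w n) + mform p v (P1 p u n) (P2 p ?w n)"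
    by (rule mform_kadd)
  also have "mform p u (P1 p u n) (P2 p ?w n) = mform p u (P1 p u n) (P2 p u n)"
    by (rule mform_P1_eq_if_mdegree_less_diff[OF qu p _ _ mdegree_less_P2_diff[OF qw qu p]]) simp_all
  finally show "Hn p ?w n = Hn p u n + mform p v (P1 p u n) (P2 p ?w n)"
    by (simp add: mform_P1_P2[OF qu p])
qed

theorem mainTheorem3:
  fixes p :: nat and u v :: "kernel mat"
  assumes "p \<ge> 1"
    and "u \<in> carrier_mat p p" and "v \<in> carrier_mat p p"
    and "quasidefinite p u"
    and "quasidefinite p (kadd p u v)"
  shows "\<forall>n z.
     meval (P1 p (kadd p u v) n) z
       = meval (P1 p u n) z - mform p v (P1 p (kadd p u v) n) (transpose_mat (Kprev_zy p u n z))
   \<and> transpose_mat (meval (P2 p (kadd p u v) n) z)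
       = transpose_mat (meval (P2 p u n) z) - mform p v (Kprev_xz p u n z) (P2 p (kadd p u v) n)
   \<and> Hn p (kadd p u v) n = Hn p u n + mform p v (P1 p (kadd p u v) n) (P2 p u n)
   \<and> Hn p (kadd p u v) n = Hn p u n + mform p v (P1 p u n) (P2 p (kadd p u v) n)"
proof (intro allI conjI)
  have p: "0 < p" using \<open>p \<ge> 1\<close> by simp
  note kadd = p \<open>quasidefinite p u\<close> \<open>quasidefinite p (kadd p u v)\<close>
  fix n z
  show "meval (P1 p (kadd p u v) n) z
      = meval (P1 p u n) z - mform p v (P1 p (kadd p u v) n) (transpose_mat (Kprev_zy p u n z))"
    by (rule meval_P1_kadd[OF kadd])
  show "transpose_mat (meval (P2 p (kadd p u v) n) z)
      = transpose_mat (meval (P2 p u n) z) - mform p v (Kprev_xz p u n z) (P2 p (kadd p u v) n)"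
    by (rule transpose_meval_P2_kadd[OF kadd])
  show "Hn p (kadd p u v) n = Hn p u n + mform p v (P1 p (kadd p u v) n) (P2 p u n)"
    "Hn p (kadd p u v) n = Hn p u n + mform p v (P1 p u n) (P2 p (kadd p u v) n)"
    by (rule Hn_kadd[OF kadd])+
qed

end
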